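(* For every $\delta\in\mathcal{D}^{LSL}$ the inequality $\tau(S_\delta)\le\rho(S_\delta)$ holds. Moreover, this inequality is sharp: for every $x\in[0,1]$ there exists some $\delta\in\mathcal{D}^{LSL}$ with $\tau(S_\delta)=\rho(S_\delta)=x$.
   Context: $\lambda_2$ is Lebesgue measure on $[0,1]^2$. Let $\mathcal{D}$ be the set of all functions $\delta:[0,1]\to[0,1]$ with $\delta(u)\le u$, $\delta(1)=1$, $\delta$ non-decreasing and 2-Lipschitz. Let $\mathcal{D}^{LSL}$ be the set of $\delta\in\mathcal{D}$ such that $x\mapsto\delta(x)/x$ is non-decreasing and $x\mapsto\delta(x)/x^2$ is non-increasing on $(0,1]$. For $\delta\in\mathcal{D}^{LSL}$, $S_\delta(x,y)=y\,\delta(x)/x$ if $y\le x$ and $x\,\delta(y)/y$ otherwise (convention $0/0:=0$); it is a copula. For a copula $C$ with doubly stochastic measure $\mu_C$ ($\mu_C([0,x]\times[0,y])=C(x,y)$), Kendall's tau is $\tau(C)=4\int_{[0,1]^2}C\,d\mu_C-1$ and Spearman's rho is $\rho(C)=12\int_{[0,1]^2}C\,d\lambda_2-3$. *)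

theory Defs
  imports "HOL-Analysis.Analysis"
begin

definition diagonals :: "(real \<Rightarrow> real) set" where
  "diagonals = {\<delta>.
     (\<forall>u\<in>{0..1}. \<delta> u \<in> {0..1}) \<and>
     (\<forall>u\<in>{0..1}. \<delta> u \<le> u) \<and>
     \<delta> 1 = 1 \<and>
     mono_on {0..1} \<delta> \<and>
     (\<forall>u\<in>{0..1}. \<forall>v\<in>{0..1}. \<bar>\<delta> u - \<delta> v\<bar> \<le> 2 * \<bar>u - v\<bar>)}"

definition diagonals_LSL :: "(real \<Rightarrow> real) set" where
  "diagonals_LSL = {\<delta> \<in> diagonals.
     mono_on {0<..1} (\<lambda>x. \<delta> x / x) \<and>
     antimono_on {0<..1} (\<lambda>x. \<delta> x / x ^ 2)}"

text \<open>The copula S_delta (division by zero yields 0 in Isabelle, matching 0/0 := 0).\<close>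
definition S_diag :: "(real \<Rightarrow> real) \<Rightarrow> real \<Rightarrow> real \<Rightarrow> real" where
  "S_diag \<delta> x y = (if y \<le> x then y * \<delta> x / x else x * \<delta> y / y)"

definition copula_measure :: "(real \<Rightarrow> real \<Rightarrow> real) \<Rightarrow> (real \<times> real) measure" where
  "copula_measure C = (THE \<mu>. sets \<mu> = sets (borel :: (real \<times> real) measure) \<and>
      emeasure \<mu> (- ({0..1} \<times> {0..1})) = 0 \<and>
      (\<forall>x\<in>{0..1}. \<forall>y\<in>{0..1}. emeasure \<mu> ({0..x} \<times> {0..y}) = ennreal (C x y)))"

definition kendall_tau :: "(real \<Rightarrow> real \<Rightarrow> real) \<Rightarrow> real" where
  "kendall_tau C = 4 * (\<integral>p. C (fst p) (snd p) \<partial>(copula_measure C)) - 1"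

definition spearman_rho :: "(real \<Rightarrow> real \<Rightarrow> real) \<Rightarrow> real" where
  "spearman_rho C = 12 * (LINT p : {0..1} \<times> {0..1} | (lborel :: (real \<times> real) measure). C (fst p) (snd p)) - 3"

end

(*
  The measure of S_delta can be written down explicitly.  With g(x) = delta(x)/x and
  psi(x) = x^2/delta(x), both nondecreasing on (0,1] by the LSL conditions, and q, r their
  generalized inverses, it consists of Lebesgue measure on {(s,v). g(s) < v <= 1} carried to the
  points (q(v), s) and (s, q(v)), plus a singular part on the diagonal with density 2s/u^2 on
  {(s,u). psi(s) < u <= 1} carried to (r(u), r(u)).  Integrating S_delta against this measure and
  against Lebesgue measure and exchanging the order of integration gives, with k(u) = g(r(u)),

    rho(S_delta) = 3 * int_0^1 u^2 k(u)^4 du,     tau(S_delta) = 2 * int_0^1 u k(u)^4 du.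

  Since k is nondecreasing and the weight 3u^2 - 2u has total mass zero and changes sign once,
  tau <= rho.  For delta(x) = b x on [0,b] and x^2 beyond, k = b on (0,1) and tau = rho = b^4.
*)
theory Submission
  imports Defs
begin

section \<open>Generalized inverses\<close>

(* Capping v at 1 keeps the set nonempty when f 1 = 1. *)
definition gen_inverse :: "(real \<Rightarrow> real) \<Rightarrow> real \<Rightarrow> real" where
  "gen_inverse f v = Inf {t \<in> {0<..1}. min v 1 \<le> f t}"

lemma gen_inverse_set:
  fixes f :: "real \<Rightarrow> real"
  assumes "f 1 = 1"
  shows "1 \<in> {t \<in> {0<..1}. min v 1 \<le> f t}" "bdd_below {t \<in> {0<..1::real}. min v 1 \<le> f t}"
  using assms by (auto intro: bdd_belowI[of _ 0])

lemma gen_inverse_bounds: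
  assumes "f 1 = 1"
  shows "0 \<le> gen_inverse f v" "gen_inverse f v \<le> 1"
proof -
  note set = gen_inverse_set[of f v, OF assms]
  show "0 \<le> gen_inverse f v" unfolding gen_inverse_def using set(1) by (intro cInf_greatest) auto
  show "gen_inverse f v \<le> 1" unfolding gen_inverse_def using set by (intro cInf_lower) auto
qed

lemma mono_gen_inverse:
  assumes "f 1 = 1"
  shows "mono (gen_inverse f)"
proof
  fix v w :: real
  assume "v \<le> w"
  then show "gen_inverse f v \<le> gen_inverse f w"
    unfolding gen_inverse_def
    by (intro cInf_superset_mono) (use gen_inverse_set[of f, OF assms] in auto)
qed

lemma gen_inverse_le_iff:
  assumes mono: "mono_on {0<..1} f" and cont: "continuous_on {0<..1} f" and "f 1 = 1"
    and "v \<le> 1" and t: "t \<in> {0<..1}"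
  shows "gen_inverse f v \<le> t \<longleftrightarrow> v \<le> f t"
proof
  assume "v \<le> f t"
  then show "gen_inverse f v \<le> t"
    unfolding gen_inverse_def using gen_inverse_set[of f v, OF \<open>f 1 = 1\<close>] \<open>v \<le> 1\<close> t
    by (intro cInf_lower) auto
next
  assume le: "gen_inverse f v \<le> t"
  show "v \<le> f t"
  proof (rule ccontr)
    assume "\<not> v \<le> f t"
    then have "0 < v - f t" by simp
    then obtain e where "e > 0"
      and e: "\<And>x. x \<in> {0<..1} \<Longrightarrow> dist x t < e \<Longrightarrow> dist (f x) (f t) < v - f t"
      using cont t unfolding continuous_on_iff by blast
    have below: "f x < v" if x: "x \<in> {0<..1}" "x < t + e" for x
    proof (cases "x \<le> t")
      case True
      then show ?thesis using mono_onD[OF mono x(1) t True] \<open>\<not> v \<le> f t\<close> by simp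
    next
      case False
      then show ?thesis using e[OF x(1)] x(2) by (auto simp: dist_real_def)
    qed
    have "t + e \<le> gen_inverse f v"
      unfolding gen_inverse_def
    proof (rule cInf_greatest)
      show "{t \<in> {0<..1}. min v 1 \<le> f t} \<noteq> {}"
        using gen_inverse_set[of f v, OF \<open>f 1 = 1\<close>] by blast
      show "t + e \<le> x" if "x \<in> {t \<in> {0<..1}. min v 1 \<le> f t}" for x
        using below[of x] that \<open>v \<le> 1\<close> by (cases "x < t + e") auto
    qed
    with le \<open>e > 0\<close> show False by simp
  qed
qed

lemma less_gen_inverse:
  assumes "mono_on {0<..1} f" "continuous_on {0<..1} f" "f 1 = 1"
    and "v \<le> 1" "s \<in> {0<..1}" "f s < v"
  shows "s < gen_inverse f v"
  using gen_inverse_le_iff[OF assms(1-5)] assms(6) by linarith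

lemma gen_inverse_inverse:
  assumes "mono_on {0<..1} f" and cont: "continuous_on {0<..1} f" and "f 1 = 1"
    and "v \<le> 1" and pos: "0 < gen_inverse f v"
  shows "f (gen_inverse f v) = v"
proof -
  define i where "i = gen_inverse f v"
  have i: "i \<in> {0<..1}" using pos gen_inverse_bounds[of f, OF \<open>f 1 = 1\<close>] by (auto simp: i_def)
  have le_iff: "\<And>t. t \<in> {0<..1} \<Longrightarrow> i \<le> t \<longleftrightarrow> v \<le> f t"
    unfolding i_def using gen_inverse_le_iff[OF assms(1-4)] .
  have "f i \<le> v"
  proof (rule ccontr)
    assume "\<not> f i \<le> v"
    then have "0 < f i - v" by simp
    then obtain e where "e > 0" and e: "\<And>x. x \<in> {0<..1} \<Longrightarrow> dist x i < e \<Longrightarrow> dist (f x) (f i) < f i - v"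
      using cont i unfolding continuous_on_iff by blast
    define x where "x = max (i / 2) (i - e / 2)"
    have x: "x \<in> {0<..1}" "x < i" "dist x i < e"
      using i \<open>e > 0\<close> by (auto simp: x_def dist_real_def)
    then have "v \<le> f x" using e[of x] by (simp add: dist_real_def)
    with le_iff[OF x(1)] x(2) show False by simp
  qed
  with le_iff[OF i] show ?thesis by (simp add: i_def)
qed

section \<open>Uniqueness of the copula measure\<close>

lemma measure_eq_on_lower_quadrants:
  fixes M N :: "(real \<times> real) measure"
  assumes sets: "sets M = sets borel" "sets N = sets borel"
    and quadrants: "\<And>a. emeasure M {..a} = emeasure N {..a}"
    and finite: "emeasure M UNIV \<noteq> \<infinity>"
  shows "M = N"
proof -
  let ?E = "range (\<lambda>a::real \<times> real. {..a})"
  have generated: "sets (borel :: (real \<times> real) measure) = sigma_sets UNIV ?E"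
    by (subst borel_eq_atMost) (simp add: sets_measure_of)
  show ?thesis
  proof (rule measure_eqI_generator_eq[where E = ?E and \<Omega> = UNIV and A = "\<lambda>i. {..(real i, real i)}"])
    show "Int_stable ?E"
    proof (clarsimp simp: Int_stable_def)
      fix a b :: "real \<times> real"
      have "{..a} \<inter> {..b} = {..(min (fst a) (fst b), min (snd a) (snd b))}"
        by (auto simp: less_eq_prod_def)
      then show "{..a} \<inter> {..b} \<in> range atMost" by blast
    qed
    show "(\<Union>i. {..(real i, real i)}) = UNIV"
    proof (rule set_eqI, simp)
      fix p :: "real \<times> real"
      obtain n where "max (fst p) (snd p) \<le> real n" using real_arch_simple by blast
      then show "\<exists>i. p \<le> (real i, real i)" by (auto simp: less_eq_prod_def)
    qed
    show "emeasure M {..(real i, real i)} \<noteq> \<infinity>" for i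
      using emeasure_mono[of "{..(real i, real i)}" UNIV M] finite sets by (auto simp: top_unique)
  qed (use quadrants sets generated in auto)
qed

definition is_copula_measure :: "(real \<Rightarrow> real \<Rightarrow> real) \<Rightarrow> (real \<times> real) measure \<Rightarrow> bool" where
  "is_copula_measure C \<mu> \<longleftrightarrow> sets \<mu> = sets borel \<and> emeasure \<mu> (- ({0..1} \<times> {0..1})) = 0 \<and>
      (\<forall>x\<in>{0..1}. \<forall>y\<in>{0..1}. emeasure \<mu> ({0..x} \<times> {0..y}) = ennreal (C x y))"

lemma emeasure_copula_measure_Int:
  assumes "is_copula_measure C \<mu>" and "A \<in> sets borel"
  shows "emeasure \<mu> A = emeasure \<mu> (A \<inter> ({0..1} \<times> {0..1}))"
proof -
  have "- ({0..1::real} \<times> {0..1::real}) \<in> sets borel"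
    by (intro borel_open open_Compl closed_Times) auto
  then have "- ({0..1} \<times> {0..1}) \<in> null_sets \<mu>"
    using assms(1) by (simp add: is_copula_measure_def null_sets_def)
  then have "emeasure \<mu> (A - (- ({0..1} \<times> {0..1}))) = emeasure \<mu> A"
    using assms by (intro emeasure_Diff_null_set) (auto simp: is_copula_measure_def)
  then show ?thesis by (simp add: Diff_eq)
qed

lemma emeasure_copula_measure_atMost:
  assumes "is_copula_measure C \<mu>"
  shows "emeasure \<mu> {..(x, y)} = (if x < 0 \<or> y < 0 then 0 else ennreal (C (min x 1) (min y 1)))"
proof (cases "x < 0 \<or> y < 0")
  case True
  then have "{..(x, y)} \<inter> ({0..1} \<times> {0..1}) = {}"
    by (auto simp: less_eq_prod_def)
  with True show ?thesis
    using emeasure_copula_measure_Int[OF assms, of "{..(x, y)}"] by simp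
next
  case False
  then have "{..(x, y)} \<inter> ({0..1} \<times> {0..1}) = {0..min x 1} \<times> {0..min y 1}"
    by (auto simp: less_eq_prod_def)
  moreover have "min x 1 \<in> {0..1}" "min y 1 \<in> {0..1}"
    using False by auto
  ultimately show ?thesis
    using False emeasure_copula_measure_Int[OF assms, of "{..(x, y)}"] assms
    by (simp add: is_copula_measure_def)
qed

lemma copula_measure_unique:
  assumes "is_copula_measure C \<mu>" "is_copula_measure C \<nu>"
  shows "\<mu> = \<nu>"
proof (rule measure_eq_on_lower_quadrants)
  show "emeasure \<mu> {..a} = emeasure \<nu> {..a}" for a
    using emeasure_copula_measure_atMost[OF assms(1)] emeasure_copula_measure_atMost[OF assms(2)]
    by (cases a) simp
  show "emeasure \<mu> UNIV \<noteq> \<infinity>"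
    using emeasure_copula_measure_Int[OF assms(1), of UNIV] assms(1)
    by (simp add: is_copula_measure_def)
qed (use assms in \<open>simp_all add: is_copula_measure_def\<close>)

lemma copula_measure_eqI:
  assumes "is_copula_measure C \<mu>"
  shows "copula_measure C = \<mu>"
  unfolding copula_measure_def is_copula_measure_def[symmetric]
  using assms copula_measure_unique by blast

section \<open>Integrals on the line and the plane\<close>

lemma has_integral_antiderivative:
  fixes F f :: "real \<Rightarrow> real"
  assumes "a \<le> b" and "\<And>x. x \<in> {a..b} \<Longrightarrow> (F has_real_derivative f x) (at x)"
    and "F b - F a = I"
  shows "(f has_integral I) {a..b}"
proof -
  have "(f has_integral (F b - F a)) {a..b}"
    using assms(1)
    by (intro fundamental_theorem_of_calculus)
      (auto simp: has_real_derivative_iff_has_vector_derivative[symmetric]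
            intro!: has_field_derivative_at_within assms(2))
  with assms(3) show ?thesis by simp
qed

lemma has_integral_power_real:
  assumes "a \<le> b"
  shows "((\<lambda>x::real. x ^ k) has_integral (b ^ Suc k - a ^ Suc k) / Suc k) {a..b}"
proof (rule has_integral_antiderivative[OF assms])
  fix x :: real
  have "((\<lambda>x. x ^ Suc k / Suc k) has_real_derivative Suc k * x ^ k / Suc k) (at x)"
    using DERIV_pow[of "Suc k" x] by (intro DERIV_cdivide) simp
  then show "((\<lambda>x. x ^ Suc k / Suc k) has_real_derivative x ^ k) (at x)"
    by (simp del: of_nat_Suc)
qed (simp add: diff_divide_distrib)

lemma has_integral_linear_real:
  "a \<le> b \<Longrightarrow> ((\<lambda>x::real. c0 + c1 * x) has_integral (c0 * (b - a) + c1 * (b\<^sup>2 - a\<^sup>2) / 2)) {a..b}"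
  by (rule has_integral_antiderivative[where F = "\<lambda>x. c0 * x + c1 * x\<^sup>2 / 2"])
    (auto intro!: derivative_eq_intros simp: algebra_simps power2_eq_square diff_divide_distrib)

lemma has_integral_inverse_square:
  assumes "0 < a" "a \<le> b"
  shows "((\<lambda>x::real. 1 / x\<^sup>2) has_integral (1 / a - 1 / b)) {a..b}"
proof (rule has_integral_antiderivative[OF assms(2)])
  fix x :: real assume "x \<in> {a..b}"
  then have "x \<noteq> 0" using assms by auto
  then show "((\<lambda>x. - 1 / x) has_real_derivative 1 / x\<^sup>2) (at x)"
    by (auto intro!: derivative_eq_intros simp: power2_eq_square)
qed simp

lemma has_integral_inverse_cube:
  assumes "0 < a" "a \<le> b"
  shows "((\<lambda>x::real. 2 / x ^ 3) has_integral (1 / a\<^sup>2 - 1 / b\<^sup>2)) {a..b}"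
proof (rule has_integral_antiderivative[OF assms(2)])
  fix x :: real assume "x \<in> {a..b}"
  then have "x \<noteq> 0" using assms by auto
  then show "((\<lambda>x. - 1 / x\<^sup>2) has_real_derivative 2 / x ^ 3) (at x)"
    by (auto intro!: derivative_eq_intros simp: power2_eq_square power3_eq_cube)
qed simp

lemma nn_set_integral_has_integral:
  fixes f :: "real \<Rightarrow> real"
  assumes "{a<..<b} \<subseteq> S" "S \<subseteq> {a..b}" and "(f has_integral I) {a..b}"
    and "\<And>x. x \<in> {a..b} \<Longrightarrow> 0 \<le> f x"
  shows "(\<integral>\<^sup>+x\<in>S. ennreal (f x) \<partial>lborel) = ennreal I"
proof -
  have same: "x \<in> S \<longleftrightarrow> x \<in> {a..b}" if "x \<noteq> a" "x \<noteq> b" for x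
    using assms(1,2) that by fastforce
  have "AE x in lborel. ennreal (f x) * indicator S x = ennreal (f x) * indicator {a..b} x"
    using AE_lborel_singleton[of a] AE_lborel_singleton[of b]
    by eventually_elim (simp add: indicator_def same)
  then have "(\<integral>\<^sup>+x\<in>S. ennreal (f x) \<partial>lborel) = (\<integral>\<^sup>+x\<in>{a..b}. ennreal (f x) \<partial>lborel)"
    by (rule nn_integral_cong_AE)
  also have "\<dots> = ennreal I"
    by (rule nn_integral_has_integral_lebesgue'[OF assms(4,3)])
  finally show ?thesis .
qed

lemma nn_set_integral_power_unit:
  assumes "0 \<le> c"
  shows "(\<integral>\<^sup>+x\<in>{0<..1}. ennreal (c * x ^ k) \<partial>lborel) = ennreal (c / Suc k)"
proof -
  have "((\<lambda>x. c * x ^ k) has_integral c / Suc k) {0..1}"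
    using has_integral_mult_right[OF has_integral_power_real[of 0 1 k], of c] by simp
  then show ?thesis using assms by (intro nn_set_integral_has_integral) auto
qed

lemma nn_set_integral_unit_split:
  fixes F f1 f2 :: "real \<Rightarrow> real"
  assumes b: "b \<in> {0..1}"
    and F: "\<And>x. x \<in> {0<..1} \<Longrightarrow> F x = (if x \<le> b then f1 x else f2 x)"
    and f1: "(f1 has_integral I1) {0..b}" "\<And>x. x \<in> {0..b} \<Longrightarrow> 0 \<le> f1 x"
    and f2: "(f2 has_integral I2) {b..1}" "\<And>x. x \<in> {b..1} \<Longrightarrow> 0 \<le> f2 x"
    and [measurable]: "f1 \<in> borel_measurable borel" "f2 \<in> borel_measurable borel"
  shows "(\<integral>\<^sup>+x\<in>{0<..1}. ennreal (F x) \<partial>lborel) = ennreal I1 + ennreal I2"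
proof -
  have "(\<integral>\<^sup>+x\<in>{0<..1}. ennreal (F x) \<partial>lborel)
      = (\<integral>\<^sup>+x. ennreal (f1 x) * indicator {0<..b} x + ennreal (f2 x) * indicator {b<..1} x \<partial>lborel)"
    by (rule nn_integral_cong) (use F b in \<open>auto simp: indicator_def\<close>)
  also have "\<dots> = (\<integral>\<^sup>+x\<in>{0<..b}. ennreal (f1 x) \<partial>lborel) + (\<integral>\<^sup>+x\<in>{b<..1}. ennreal (f2 x) \<partial>lborel)"
    by (rule nn_integral_add) auto
  also have "(\<integral>\<^sup>+x\<in>{0<..b}. ennreal (f1 x) \<partial>lborel) = ennreal I1"
    by (rule nn_set_integral_has_integral[OF _ _ f1]) auto
  also have "(\<integral>\<^sup>+x\<in>{b<..1}. ennreal (f2 x) \<partial>lborel) = ennreal I2"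
    by (rule nn_set_integral_has_integral[OF _ _ f2]) auto
  finally show ?thesis .
qed

lemma nn_set_integral_ennreal_add:
  assumes [measurable]: "f \<in> borel_measurable M" "h \<in> borel_measurable M" "A \<in> sets M"
    and "\<And>x. x \<in> A \<Longrightarrow> 0 \<le> f x" "\<And>x. x \<in> A \<Longrightarrow> 0 \<le> h x"
  shows "(\<integral>\<^sup>+x\<in>A. ennreal (f x + h x) \<partial>M)
       = (\<integral>\<^sup>+x\<in>A. ennreal (f x) \<partial>M) + (\<integral>\<^sup>+x\<in>A. ennreal (h x) \<partial>M)"
proof -
  have "(\<integral>\<^sup>+x\<in>A. ennreal (f x + h x) \<partial>M) = (\<integral>\<^sup>+x\<in>A. ennreal (f x) + ennreal (h x) \<partial>M)"
    by (rule set_nn_integral_cong) (use assms(4,5) in auto)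
  also have "\<dots> = (\<integral>\<^sup>+x\<in>A. ennreal (f x) \<partial>M) + (\<integral>\<^sup>+x\<in>A. ennreal (h x) \<partial>M)"
    by (rule nn_set_integral_add) auto
  finally show ?thesis .
qed

lemma nn_set_integral_ennreal_add3:
  assumes "f1 \<in> borel_measurable M" "f2 \<in> borel_measurable M" "f3 \<in> borel_measurable M" "A \<in> sets M"
    and "\<And>x. x \<in> A \<Longrightarrow> 0 \<le> f1 x" "\<And>x. x \<in> A \<Longrightarrow> 0 \<le> f2 x" "\<And>x. x \<in> A \<Longrightarrow> 0 \<le> f3 x"
  shows "(\<integral>\<^sup>+x\<in>A. ennreal (f1 x + f2 x + f3 x) \<partial>M)
       = (\<integral>\<^sup>+x\<in>A. ennreal (f1 x) \<partial>M) + (\<integral>\<^sup>+x\<in>A. ennreal (f2 x) \<partial>M) + (\<integral>\<^sup>+x\<in>A. ennreal (f3 x) \<partial>M)"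
proof -
  have "(\<integral>\<^sup>+x\<in>A. ennreal (f1 x + f2 x + f3 x) \<partial>M)
      = (\<integral>\<^sup>+x\<in>A. ennreal (f1 x + f2 x) \<partial>M) + (\<integral>\<^sup>+x\<in>A. ennreal (f3 x) \<partial>M)"
    by (rule nn_set_integral_ennreal_add) (use assms in \<open>auto intro: add_nonneg_nonneg\<close>)
  also have "(\<integral>\<^sup>+x\<in>A. ennreal (f1 x + f2 x) \<partial>M)
      = (\<integral>\<^sup>+x\<in>A. ennreal (f1 x) \<partial>M) + (\<integral>\<^sup>+x\<in>A. ennreal (f2 x) \<partial>M)"
    by (rule nn_set_integral_ennreal_add) (use assms in auto)
  finally show ?thesis .
qed

lemma nn_set_integral_ennreal_cmult:
  assumes [measurable]: "f \<in> borel_measurable M" "A \<in> sets M"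
    and "0 \<le> c" and "\<And>x. x \<in> A \<Longrightarrow> 0 \<le> f x"
  shows "(\<integral>\<^sup>+x\<in>A. ennreal (c * f x) \<partial>M) = ennreal c * (\<integral>\<^sup>+x\<in>A. ennreal (f x) \<partial>M)"
proof -
  have "(\<integral>\<^sup>+x\<in>A. ennreal (c * f x) \<partial>M) = (\<integral>\<^sup>+x. ennreal c * (ennreal (f x) * indicator A x) \<partial>M)"
    by (rule nn_integral_cong) (use assms(3,4) in \<open>auto simp: indicator_def ennreal_mult\<close>)
  also have "\<dots> = ennreal c * (\<integral>\<^sup>+x\<in>A. ennreal (f x) \<partial>M)"
    by (rule nn_integral_cmult) simp
  finally show ?thesis .
qed

lemma nn_set_integral_ennreal_bounded:
  assumes "A \<in> sets M" and "\<And>x. x \<in> A \<Longrightarrow> f x \<le> c"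
  shows "(\<integral>\<^sup>+x\<in>A. ennreal (f x) \<partial>M) \<le> ennreal c * emeasure M A"
proof -
  have "(\<integral>\<^sup>+x\<in>A. ennreal (f x) \<partial>M) \<le> (\<integral>\<^sup>+x. ennreal c * indicator A x \<partial>M)"
    by (intro nn_integral_mono) (use assms(2) in \<open>auto simp: indicator_def intro: ennreal_leI\<close>)
  also have "\<dots> = ennreal c * emeasure M A" using assms(1) by (rule nn_integral_cmult_indicator)
  finally show ?thesis .
qed

lemma measurable_pair_borel_real:
  "f \<in> measurable (borel \<Otimes>\<^sub>M borel) N \<Longrightarrow> f \<in> measurable (borel :: (real \<times> real) measure) N"
  by (simp add: borel_prod)

lemma lborel_pair_nn_integral_fst:
  assumes "f \<in> borel_measurable (borel \<Otimes>\<^sub>M (borel :: real measure))"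
  shows "(\<integral>\<^sup>+z. f z \<partial>lborel) = (\<integral>\<^sup>+x. \<integral>\<^sup>+y. f (x, y) \<partial>lborel \<partial>lborel)"
  by (subst lborel_prod[symmetric], rule lborel.nn_integral_fst[symmetric])
    (use assms in \<open>simp add: measurable_cong_sets[OF sets_pair_measure_cong[OF sets_lborel sets_lborel] refl]\<close>)

lemma lborel_pair_nn_integral_snd:
  assumes "f \<in> borel_measurable (borel \<Otimes>\<^sub>M (borel :: real measure))"
  shows "(\<integral>\<^sup>+z. f z \<partial>lborel) = (\<integral>\<^sup>+y. \<integral>\<^sup>+x. f (x, y) \<partial>lborel \<partial>lborel)"
  by (subst lborel_prod[symmetric], rule lborel_pair.nn_integral_snd[symmetric])
    (use assms in \<open>simp add: measurable_cong_sets[OF sets_pair_measure_cong[OF sets_lborel sets_lborel] refl]\<close>)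

lemma nn_set_integral_chebyshev_weights:
  fixes h :: "real \<Rightarrow> real"
  assumes mono: "mono_on {0<..1} h" and nonneg: "\<And>u. u \<in> {0<..1} \<Longrightarrow> 0 \<le> h u"
    and [measurable]: "h \<in> borel_measurable borel"
  shows "(\<integral>\<^sup>+u\<in>{0<..1}. ennreal (2 * u * h u) \<partial>lborel) \<le> (\<integral>\<^sup>+u\<in>{0<..1}. ennreal (3 * u\<^sup>2 * h u) \<partial>lborel)"
proof -
  define K where "K = h (2/3)"
  have "0 \<le> K" using nonneg by (simp add: K_def)
  \<comment> \<open>the weights 2u and 3u^2 have equal mass on (0,1] and cross at 2/3\<close>
  have pointwise: "2 * u * h u + 3 * u\<^sup>2 * K \<le> 3 * u\<^sup>2 * h u + 2 * u * K" if u: "u \<in> {0<..1}" for u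
  proof -
    have "0 \<le> (3 * u - 2) * (h u - K)"
    proof (cases "u \<le> 2/3")
      case True
      then have "h u \<le> K" using mono u by (auto simp: K_def intro: mono_onD)
      with True show ?thesis by (intro mult_nonpos_nonpos) auto
    next
      case False
      then have "K \<le> h u" using mono u by (auto simp: K_def intro: mono_onD)
      with False show ?thesis by (intro mult_nonneg_nonneg) auto
    qed
    then have "0 \<le> u * ((3 * u - 2) * (h u - K))" using u by simp
    then show ?thesis by (simp add: algebra_simps power2_eq_square)
  qed
  have mass: "(\<integral>\<^sup>+u\<in>{0<..1}. ennreal (3 * u\<^sup>2 * K) \<partial>lborel) = ennreal K"
    "(\<integral>\<^sup>+u\<in>{0<..1}. ennreal (2 * u * K) \<partial>lborel) = ennreal K"
    using nn_set_integral_power_unit[of "3 * K" 2] nn_set_integral_power_unit[of "2 * K" 1] \<open>0 \<le> K\<close>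
    by (simp_all add: mult_ac)
  have "(\<integral>\<^sup>+u\<in>{0<..1}. ennreal (2 * u * h u) \<partial>lborel) + ennreal K
      = (\<integral>\<^sup>+u\<in>{0<..1}. ennreal (2 * u * h u + 3 * u\<^sup>2 * K) \<partial>lborel)"
    unfolding mass(1)[symmetric] using nonneg \<open>0 \<le> K\<close>
    by (intro nn_set_integral_ennreal_add[symmetric]) auto
  also have "\<dots> \<le> (\<integral>\<^sup>+u\<in>{0<..1}. ennreal (3 * u\<^sup>2 * h u + 2 * u * K) \<partial>lborel)"
    using pointwise by (intro nn_integral_mono) (simp add: indicator_def ennreal_leI)
  also have "\<dots> = (\<integral>\<^sup>+u\<in>{0<..1}. ennreal (3 * u\<^sup>2 * h u) \<partial>lborel) + ennreal K"
    unfolding mass(2)[symmetric] using nonneg \<open>0 \<le> K\<close>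
    by (intro nn_set_integral_ennreal_add) auto
  finally show ?thesis using ennreal_add_left_cancel_le by (simp add: add.commute)
qed

section \<open>LSL diagonals\<close>

locale LSL_diagonal =
  fixes \<delta> :: "real \<Rightarrow> real"
  assumes in_LSL: "\<delta> \<in> diagonals_LSL"
begin

lemma
  shows delta_nonneg: "u \<in> {0..1} \<Longrightarrow> 0 \<le> \<delta> u"
    and delta_le: "u \<in> {0..1} \<Longrightarrow> \<delta> u \<le> u"
    and delta_1: "\<delta> 1 = 1"
    and delta_lipschitz: "2-lipschitz_on {0..1} \<delta>"
    and mono_on_delta_div: "mono_on {0<..1} (\<lambda>x. \<delta> x / x)"
    and antimono_on_delta_div_square: "antimono_on {0<..1} (\<lambda>x. \<delta> x / x\<^sup>2)"
  using in_LSL unfolding diagonals_LSL_def diagonals_def lipschitz_on_def dist_real_def by auto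

text \<open>Only the values of \<delta> on [0,1] are constrained, so we work with its continuous extension
  \<open>d\<close>, which is constant outside [0,1].\<close>

definition d :: "real \<Rightarrow> real" where "d x = \<delta> (max 0 (min 1 x))"
definition g :: "real \<Rightarrow> real" where "g x = d x / x"
definition psi :: "real \<Rightarrow> real" where "psi x = x\<^sup>2 / d x"
definition q :: "real \<Rightarrow> real" where "q = gen_inverse g"
definition r :: "real \<Rightarrow> real" where "r = gen_inverse psi"

lemma d_eq: "x \<in> {0..1} \<Longrightarrow> d x = \<delta> x"
  by (auto simp: d_def max_def min_def)

lemma continuous_on_d: "continuous_on UNIV d"
  unfolding d_def
  by (rule continuous_on_compose2[OF lipschitz_on_continuous_on[OF delta_lipschitz]])
    (auto intro!: continuous_intros)

lemma d_measurable [measurable]: "d \<in> borel_measurable borel"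
  using continuous_on_d by (rule borel_measurable_continuous_onI)

lemma d_1 [simp]: "d 1 = 1"
  using delta_1 d_eq[of 1] by simp

lemma d_nonneg: "x \<in> {0..1} \<Longrightarrow> 0 \<le> d x"
  using delta_nonneg d_eq by simp

lemma d_le: "x \<in> {0..1} \<Longrightarrow> d x \<le> x"
  using delta_le d_eq by simp

lemma square_le_d:
  assumes "x \<in> {0<..1}"
  shows "x\<^sup>2 \<le> d x"
proof -
  have "\<delta> 1 / 1\<^sup>2 \<le> \<delta> x / x\<^sup>2"
    using monotone_onD[OF antimono_on_delta_div_square, of x 1] assms by auto
  then show ?thesis using assms delta_1 d_eq[of x] by (auto simp: field_simps)
qed

lemma d_pos: "x \<in> {0<..1} \<Longrightarrow> 0 < d x"
  using square_le_d[of x] by (auto intro: less_le_trans[OF zero_less_power])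

lemma g_0 [simp]: "g 0 = 0" and g_1 [simp]: "g 1 = 1"
  by (simp_all add: g_def)

lemma g_nonneg: "x \<in> {0..1} \<Longrightarrow> 0 \<le> g x"
  using d_nonneg[of x] by (auto simp: g_def)

lemma g_le_1: "x \<in> {0..1} \<Longrightarrow> g x \<le> 1"
  using d_le[of x] d_nonneg[of x] by (auto simp: g_def divide_le_eq)

lemma mono_on_g: "mono_on {0<..1} g"
  using mono_on_delta_div unfolding g_def monotone_on_def by (auto simp: d_eq)

lemma g_mono: "s \<in> {0..1} \<Longrightarrow> t \<in> {0<..1} \<Longrightarrow> s \<le> t \<Longrightarrow> g s \<le> g t"
  using monotone_onD[OF mono_on_g, of s t] g_nonneg[of t] by (cases "s = 0") auto

lemma continuous_on_g: "continuous_on {0<..1} g"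
  unfolding g_def by (intro continuous_intros continuous_on_subset[OF continuous_on_d]) auto

lemma g_measurable [measurable]: "g \<in> borel_measurable borel"
  unfolding g_def by measurable

lemma psi_1 [simp]: "psi 1 = 1"
  by (simp add: psi_def)

lemma psi_pos: "x \<in> {0<..1} \<Longrightarrow> 0 < psi x"
  using d_pos[of x] by (simp add: psi_def)

lemma psi_le_1: "x \<in> {0<..1} \<Longrightarrow> psi x \<le> 1"
  using square_le_d[of x] d_pos[of x] by (simp add: psi_def)

lemma mono_on_psi: "mono_on {0<..1} psi"
proof (rule monotone_onI)
  fix x y :: real
  assume xy: "x \<in> {0<..1}" "y \<in> {0<..1}" "x \<le> y"
  then have "\<delta> y / y\<^sup>2 \<le> \<delta> x / x\<^sup>2"
    using monotone_onD[OF antimono_on_delta_div_square, of x y] by auto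
  moreover have "0 < \<delta> y / y\<^sup>2" using d_pos[of y] d_eq[of y] xy by simp
  ultimately have "inverse (\<delta> x / x\<^sup>2) \<le> inverse (\<delta> y / y\<^sup>2)" by (rule le_imp_inverse_le)
  then show "psi x \<le> psi y" using xy by (simp add: psi_def d_eq)
qed

lemma psi_mono: "s \<in> {0<..1} \<Longrightarrow> t \<in> {0<..1} \<Longrightarrow> s \<le> t \<Longrightarrow> psi s \<le> psi t"
  using monotone_onD[OF mono_on_psi] by simp

lemma continuous_on_psi: "continuous_on {0<..1} psi"
  unfolding psi_def using d_pos
  by (intro continuous_intros continuous_on_subset[OF continuous_on_d]) force+

lemma psi_measurable [measurable]: "psi \<in> borel_measurable borel"
  unfolding psi_def by measurable

lemma div_psi: "x / psi x = g x"
  by (cases "d x = 0") (simp_all add: psi_def g_def field_simps power2_eq_square)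

lemmas q_bounds = gen_inverse_bounds[of g, OF g_1, folded q_def]
lemmas q_le_iff = gen_inverse_le_iff[OF mono_on_g continuous_on_g g_1, folded q_def]
lemmas less_q = less_gen_inverse[OF mono_on_g continuous_on_g g_1, folded q_def]
lemmas g_q = gen_inverse_inverse[OF mono_on_g continuous_on_g g_1, folded q_def]
lemmas r_bounds = gen_inverse_bounds[of psi, OF psi_1, folded r_def]
lemmas r_le_iff = gen_inverse_le_iff[OF mono_on_psi continuous_on_psi psi_1, folded r_def]
lemmas less_r = less_gen_inverse[OF mono_on_psi continuous_on_psi psi_1, folded r_def]
lemmas psi_r = gen_inverse_inverse[OF mono_on_psi continuous_on_psi psi_1, folded r_def]

lemma mono_r: "mono r"
  unfolding r_def using psi_1 by (rule mono_gen_inverse)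

lemma r_eq_g_r: "u \<in> {0<..1} \<Longrightarrow> r u = u * g (r u)"
  using psi_r[of u] div_psi[of "r u"] r_bounds(1)[of u]
  by (cases "r u = 0") (auto simp: field_simps)

lemma r_power_eq: "u \<in> {0<..1} \<Longrightarrow> r u ^ n = u ^ n * g (r u) ^ n"
  by (metis r_eq_g_r power_mult_distrib)

lemma q_measurable [measurable]: "q \<in> borel_measurable borel"
  unfolding q_def using g_1 by (intro borel_measurable_mono mono_gen_inverse)

lemma r_measurable [measurable]: "r \<in> borel_measurable borel"
  using mono_r by (rule borel_measurable_mono)

subsection \<open>The measure of the copula\<close>

definition above_g :: "(real \<times> real) set" where
  "above_g = {(s, v). s \<in> {0<..1} \<and> g s < v \<and> v \<le> 1}"

definition above_psi :: "(real \<times> real) set" where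
  "above_psi = {(s, u). s \<in> {0<..1} \<and> psi s < u \<and> u \<le> 1}"

lemma above_g_measurable [measurable]: "above_g \<in> sets (borel \<Otimes>\<^sub>M borel)"
proof -
  have "above_g = {z \<in> space (borel \<Otimes>\<^sub>M borel). 0 < fst z \<and> fst z \<le> 1 \<and> g (fst z) < snd z \<and> snd z \<le> 1}"
    by (auto simp: above_g_def space_pair_measure)
  also have "\<dots> \<in> sets (borel \<Otimes>\<^sub>M borel)" by measurable
  finally show ?thesis .
qed

lemma above_psi_measurable [measurable]: "above_psi \<in> sets (borel \<Otimes>\<^sub>M borel)"
proof -
  have "above_psi = {z \<in> space (borel \<Otimes>\<^sub>M borel). 0 < fst z \<and> fst z \<le> 1 \<and> psi (fst z) < snd z \<and> snd z \<le> 1}"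
    by (auto simp: above_psi_def space_pair_measure)
  also have "\<dots> \<in> sets (borel \<Otimes>\<^sub>M borel)" by measurable
  finally show ?thesis .
qed

lemma above_gD:
  assumes "(s, v) \<in> above_g"
  shows "0 < s" "s < q v" "g (q v) = v"
proof -
  have s: "s \<in> {0<..1}" and v: "g s < v" "v \<le> 1" using assms by (auto simp: above_g_def)
  show "0 < s" using s by simp
  show "s < q v" using less_q[OF v(2) s v(1)] .
  with s v(2) show "g (q v) = v" by (intro g_q) auto
qed

lemma q_le_iff_above_g:
  assumes "(s, v) \<in> above_g" "x \<in> {0..1}"
  shows "q v \<le> x \<longleftrightarrow> v \<le> g x"
proof (cases "x = 0")
  case True
  have "0 \<le> g s" "g s < v" using assms(1) g_nonneg by (auto simp: above_g_def)
  then show ?thesis using True above_gD[OF assms(1)] by simp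
next
  case False
  with assms show ?thesis using q_le_iff[of v x] by (auto simp: above_g_def)
qed

lemma above_psi_iff: "(s, u) \<in> above_psi \<longleftrightarrow> u \<in> {0<..1} \<and> s \<in> {0<..<r u}"
proof
  assume "(s, u) \<in> above_psi"
  then have s: "s \<in> {0<..1}" and u: "psi s < u" "u \<le> 1" by (auto simp: above_psi_def)
  then show "u \<in> {0<..1} \<and> s \<in> {0<..<r u}"
    using psi_pos[OF s] less_r[OF u(2) s u(1)] by auto
next
  assume u: "u \<in> {0<..1} \<and> s \<in> {0<..<r u}"
  then have s: "s \<in> {0<..1}" using r_bounds(2)[of u] by auto
  then have "\<not> u \<le> psi s" using r_le_iff[of u s] u by auto
  then show "(s, u) \<in> above_psi" using u s by (auto simp: above_psi_def)
qed

lemma nn_integral_above_psi_fixed_u: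
  assumes "0 \<le> c"
  shows "(\<integral>\<^sup>+s. ennreal (c * s ^ n) * indicator above_psi (s, u) \<partial>lborel)
       = ennreal (c * r u ^ Suc n / Suc n) * indicator {0<..1} u"
proof (cases "u \<in> {0<..1}")
  case True
  have "(\<integral>\<^sup>+s. ennreal (c * s ^ n) * indicator above_psi (s, u) \<partial>lborel)
      = (\<integral>\<^sup>+s\<in>{0<..<r u}. ennreal (c * s ^ n) \<partial>lborel)"
    by (rule nn_integral_cong) (use True in \<open>auto simp: above_psi_iff indicator_def\<close>)
  also have "\<dots> = ennreal (c * r u ^ Suc n / Suc n)"
  proof (rule nn_set_integral_has_integral)
    show "((\<lambda>s. c * s ^ n) has_integral c * r u ^ Suc n / Suc n) {0..r u}"
      using has_integral_mult_right[OF has_integral_power_real[of 0 "r u" n], of c] r_bounds(1)[of u]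
      by simp
  qed (use assms in auto)
  finally show ?thesis using True by simp
next
  case False
  then show ?thesis by (auto simp: above_psi_iff indicator_def)
qed

lemma nn_integral_above_psi_fixed_s:
  assumes s: "s \<in> {0<..1}" and k: "(k has_integral I) {psi s..1}"
    and k_nonneg: "\<And>u. u \<in> {psi s..1} \<Longrightarrow> 0 \<le> k u" and "0 \<le> c"
  shows "(\<integral>\<^sup>+u. ennreal (c * k u) * indicator above_psi (s, u) \<partial>lborel) = ennreal (c * I)"
proof -
  have "(\<integral>\<^sup>+u. ennreal (c * k u) * indicator above_psi (s, u) \<partial>lborel)
      = (\<integral>\<^sup>+u\<in>{psi s<..1}. ennreal (c * k u) \<partial>lborel)"
    by (rule nn_integral_cong) (use s in \<open>auto simp: above_psi_def indicator_def\<close>)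
  also have "\<dots> = ennreal (c * I)"
    by (rule nn_set_integral_has_integral[OF _ _ has_integral_mult_right[OF k]])
      (use k_nonneg \<open>0 \<le> c\<close> in auto)
  finally show ?thesis .
qed

text \<open>The measure of \<open>S_diag \<delta>\<close> is the image of a measure on three copies of the plane,
  indexed by 0, 1, 2: the first two carry Lebesgue measure on \<open>above_g\<close>, mapped by
  \<open>(s, v) \<mapsto> (q v, s)\<close> and by its mirror image \<open>(s, v) \<mapsto> (s, q v)\<close>; the third carries
  the density \<open>2 s / u\<^sup>2\<close> on \<open>above_psi\<close>, mapped onto the diagonal by
  \<open>(s, u) \<mapsto> (r u, r u)\<close>.\<close>

definition piece_density :: "nat \<Rightarrow> real \<times> real \<Rightarrow> ennreal" where
  "piece_density i z = (if i = 2 then indicator above_psi z * ennreal (2 * fst z / (snd z)\<^sup>2)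
                        else indicator above_g z)"

definition piece_map :: "nat \<Rightarrow> real \<times> real \<Rightarrow> real \<times> real" where
  "piece_map i z = (if i = 0 then (q (snd z), fst z) else if i = 1 then (fst z, q (snd z))
                    else (r (snd z), r (snd z)))"

definition pieces :: "(nat \<times> (real \<times> real)) measure" where
  "pieces = count_space {0, 1, 2} \<Otimes>\<^sub>M lborel"

definition mu :: "(real \<times> real) measure" where
  "mu = distr (density pieces (case_prod piece_density)) borel (case_prod piece_map)"

lemma sets_mu: "sets mu = sets borel"
  by (simp add: mu_def)

lemma piece_density_measurable [measurable]: "case_prod piece_density \<in> borel_measurable pieces"
  unfolding pieces_def
  by (rule measurable_pair_measure_countable1)
    (auto simp: piece_density_def measurable_lborel2 intro!: measurable_pair_borel_real)

lemma piece_map_measurable [measurable]: "case_prod piece_map \<in> measurable pieces borel"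
  unfolding pieces_def
  by (rule measurable_pair_measure_countable1)
    (auto simp: piece_map_def measurable_lborel2 intro!: measurable_pair_borel_real)

lemma nn_integral_mu:
  assumes [measurable]: "f \<in> borel_measurable borel"
  shows "(\<integral>\<^sup>+p. f p \<partial>mu)
       = (\<integral>\<^sup>+z\<in>above_g. f (q (snd z), fst z) \<partial>lborel)
       + (\<integral>\<^sup>+z\<in>above_g. f (fst z, q (snd z)) \<partial>lborel)
       + (\<integral>\<^sup>+z\<in>above_psi. ennreal (2 * fst z / (snd z)\<^sup>2) * f (r (snd z), r (snd z)) \<partial>lborel)"
    (is "_ = ?rhs")
proof -
  have "(\<integral>\<^sup>+p. f p \<partial>mu) = (\<integral>\<^sup>+p. case_prod piece_density p * f (case_prod piece_map p) \<partial>pieces)"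
    unfolding mu_def by (simp add: nn_integral_distr nn_integral_density)
  also have "\<dots> = (\<integral>\<^sup>+i. \<integral>\<^sup>+z. piece_density i z * f (piece_map i z) \<partial>lborel \<partial>count_space {0, 1, 2})"
  proof -
    have "(\<lambda>p. case_prod piece_density p * f (case_prod piece_map p)) \<in> borel_measurable pieces"
      by measurable
    from lborel.nn_integral_fst[OF this[unfolded pieces_def]] show ?thesis
      by (simp add: pieces_def)
  qed
  also have "\<dots> = (\<Sum>i\<in>{0, 1, 2::nat}. \<integral>\<^sup>+z. piece_density i z * f (piece_map i z) \<partial>lborel)"
    by (rule nn_integral_count_space_finite) simp
  also have "\<dots> = ?rhs"
    by (simp add: piece_density_def piece_map_def mult_ac add_ac)
  finally show ?thesis .
qed

lemma lower_piece_section: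
  assumes x: "x \<in> {0..1}" and y: "y \<in> {0..1}"
  shows "(\<integral>\<^sup>+v. indicator ({0..x} \<times> {0..y}) (q v, s) * indicator above_g (s, v) \<partial>lborel)
       = ennreal (g x - g s) * indicator {0<..y} s"
proof (cases "s \<in> {0<..1}")
  case s: True
  have "(\<integral>\<^sup>+v. indicator ({0..x} \<times> {0..y}) (q v, s) * indicator above_g (s, v) \<partial>lborel)
      = (\<integral>\<^sup>+v. indicator {0<..y} s * indicator {g s<..g x} v \<partial>lborel)"
  proof (rule nn_integral_cong)
    fix v
    have "(q v, s) \<in> {0..x} \<times> {0..y} \<and> (s, v) \<in> above_g \<longleftrightarrow> s \<in> {0<..y} \<and> v \<in> {g s<..g x}"
    proof (cases "(s, v) \<in> above_g")
      case True
      then show ?thesis using q_le_iff_above_g[OF True x] q_bounds(1)[of v] s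
        by (auto simp: above_g_def)
    next
      case False
      then show ?thesis using s g_le_1[OF x] by (auto simp: above_g_def)
    qed
    then show "indicator ({0..x} \<times> {0..y}) (q v, s) * indicator above_g (s, v)
        = indicator {0<..y} s * (indicator {g s<..g x} v :: ennreal)"
      unfolding indicator_def of_bool_conj[symmetric] by (rule arg_cong)
  qed
  also have "\<dots> = indicator {0<..y} s * emeasure lborel {g s<..g x}"
    by (rule nn_integral_cmult_indicator) simp
  also have "\<dots> = ennreal (g x - g s) * indicator {0<..y} s"
    by (cases "g s \<le> g x") (auto simp: ennreal_neg mult.commute)
  finally show ?thesis .
next
  case False
  then show ?thesis using y by (auto simp: above_g_def indicator_def)
qed

lemma lower_piece_rectangle:
  assumes "x \<in> {0..1}" and "y \<in> {0..1}"
  shows "(\<integral>\<^sup>+z\<in>above_g. indicator ({0..x} \<times> {0..y}) (q (snd z), fst z) \<partial>lborel)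
       = (\<integral>\<^sup>+s\<in>{0<..y}. ennreal (g x - g s) \<partial>lborel)"
proof -
  have "(\<lambda>z. indicator ({0..x} \<times> {0..y}) (q (snd z), fst z) * indicator above_g z :: ennreal)
      \<in> borel_measurable (borel \<Otimes>\<^sub>M borel)"
    by measurable
  from lborel_pair_nn_integral_fst[OF this] show ?thesis
    by (simp add: lower_piece_section[OF assms])
qed

lemma diagonal_piece_section:
  assumes s: "s \<in> {0<..1}" and t: "t \<in> {0<..1}"
  shows "(\<integral>\<^sup>+u. ennreal (2 * s / u\<^sup>2) * indicator {0..t} (r u) * indicator above_psi (s, u) \<partial>lborel)
       = ennreal (2 * g s - 2 * s / psi t) * indicator {0<..t} s"
proof -
  have "(\<integral>\<^sup>+u. ennreal (2 * s / u\<^sup>2) * indicator {0..t} (r u) * indicator above_psi (s, u) \<partial>lborel)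
      = (\<integral>\<^sup>+u\<in>{psi s<..psi t}. ennreal (2 * s / u\<^sup>2) \<partial>lborel)"
  proof (rule nn_integral_cong)
    fix u
    have "r u \<in> {0..t} \<and> (s, u) \<in> above_psi \<longleftrightarrow> u \<in> {psi s<..psi t}"
      using r_le_iff[of u t] r_bounds(1)[of u] s t psi_le_1[OF t] by (auto simp: above_psi_def)
    then show "ennreal (2 * s / u\<^sup>2) * indicator {0..t} (r u) * indicator above_psi (s, u)
        = ennreal (2 * s / u\<^sup>2) * indicator {psi s<..psi t} u"
      unfolding indicator_def mult.assoc of_bool_conj[symmetric] by (rule arg_cong)
  qed
  also have "\<dots> = ennreal (2 * g s - 2 * s / psi t) * indicator {0<..t} s"
  proof (cases "s \<le> t")
    case True
    have "psi s \<le> psi t" using psi_mono[OF s t True] .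
    have "((\<lambda>u. 2 * s * (1 / u\<^sup>2)) has_integral 2 * s * (1 / psi s - 1 / psi t)) {psi s..psi t}"
      using has_integral_inverse_square[OF psi_pos[OF s] \<open>psi s \<le> psi t\<close>]
      by (rule has_integral_mult_right)
    then have "(\<integral>\<^sup>+u\<in>{psi s<..psi t}. ennreal (2 * s / u\<^sup>2) \<partial>lborel)
        = ennreal (2 * s * (1 / psi s - 1 / psi t))"
      using psi_pos[OF s] s by (intro nn_set_integral_has_integral) auto
    also have "2 * s * (1 / psi s - 1 / psi t) = 2 * (s / psi s) - 2 * s / psi t"
      by (simp add: algebra_simps)
    also have "\<dots> = 2 * g s - 2 * s / psi t"
      by (simp add: div_psi)
    finally show ?thesis using True s by simp
  next
    case False
    then have "psi t \<le> psi s" using psi_mono[OF t s] by simp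
    then have "2 * s / psi s \<le> 2 * s / psi t"
      using s psi_pos[OF t] by (intro divide_left_mono) auto
    then have "ennreal (2 * g s - 2 * s / psi t) = 0"
      using div_psi[of s] by (simp add: ennreal_neg)
    then show ?thesis using \<open>psi t \<le> psi s\<close> by simp
  qed
  finally show ?thesis .
qed

lemma diagonal_piece_rectangle:
  assumes t: "t \<in> {0..1}"
  shows "(\<integral>\<^sup>+z\<in>above_psi. ennreal (2 * fst z / (snd z)\<^sup>2) * indicator {0..t} (r (snd z)) \<partial>lborel)
       = (\<integral>\<^sup>+s\<in>{0<..t}. ennreal (2 * g s - 2 * s / psi t) \<partial>lborel)"
proof (cases "t = 0")
  case True
  then have zero: "ennreal (2 * fst z / (snd z)\<^sup>2) * indicator {0..t} (r (snd z)) * indicator above_psi z = 0"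
    for z
    using above_psi_iff[of "fst z" "snd z"] by (auto simp: indicator_def)
  have "(\<integral>\<^sup>+z\<in>above_psi. ennreal (2 * fst z / (snd z)\<^sup>2) * indicator {0..t} (r (snd z)) \<partial>lborel)
      = (\<integral>\<^sup>+z. 0 \<partial>(lborel :: (real \<times> real) measure))"
    by (rule nn_integral_cong) (rule zero)
  with True show ?thesis by simp
next
  case False
  with t have t: "t \<in> {0<..1}" by simp
  have slice: "(\<integral>\<^sup>+u. ennreal (2 * s / u\<^sup>2) * indicator {0..t} (r u) * indicator above_psi (s, u) \<partial>lborel)
      = ennreal (2 * g s - 2 * s / psi t) * indicator {0<..t} s" for s
    using diagonal_piece_section[OF _ t, of s] t by (cases "s \<in> {0<..1}") (auto simp: above_psi_def)
  have "(\<lambda>z. ennreal (2 * fst z / (snd z)\<^sup>2) * indicator {0..t} (r (snd z)) * indicator above_psi z)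
      \<in> borel_measurable (borel \<Otimes>\<^sub>M borel)"
    by measurable
  from lborel_pair_nn_integral_fst[OF this] show ?thesis by (simp add: slice)
qed

lemma psi_nonneg: "x \<in> {0..1} \<Longrightarrow> 0 \<le> psi x"
  using d_nonneg[of x] by (simp add: psi_def)

lemma nn_set_integral_g_sub_restrict:
  assumes "0 \<le> y" "y \<le> x" "x \<le> 1"
  shows "(\<integral>\<^sup>+s\<in>{0<..x}. ennreal (g y - g s) \<partial>lborel) = (\<integral>\<^sup>+s\<in>{0<..y}. ennreal (g y - g s) \<partial>lborel)"
proof (rule nn_integral_cong)
  fix s
  have "ennreal (g y - g s) = 0" if "s \<in> {y<..x}"
    using that assms g_mono[of y s] by (simp add: ennreal_neg)
  then show "ennreal (g y - g s) * indicator {0<..x} s = ennreal (g y - g s) * indicator {0<..y} s"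
    using assms by (auto simp: indicator_def)
qed

lemma rectangle_pieces_sum:
  assumes y: "0 \<le> y" "y \<le> x" and x: "x \<le> 1"
  shows "(\<integral>\<^sup>+s\<in>{0<..y}. ennreal (g x - g s) \<partial>lborel) + (\<integral>\<^sup>+s\<in>{0<..x}. ennreal (g y - g s) \<partial>lborel)
       + (\<integral>\<^sup>+s\<in>{0<..y}. ennreal (2 * g s - 2 * s / psi y) \<partial>lborel) = ennreal (y * g x)"
proof -
  have gy_le_gx: "g y \<le> g x"
    using y x by (cases "x = 0") (auto intro: g_mono)
  have pointwise: "g s \<le> g y" "2 * s / psi y \<le> 2 * g s" if s: "s \<in> {0<..y}" for s
  proof -
    show "g s \<le> g y" using s y x by (intro g_mono) auto
    have "psi s \<le> psi y" "0 < psi s" using s y x by (auto intro: psi_mono psi_pos)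
    then have "2 * s / psi y \<le> 2 * (s / psi s)" using s by (simp add: frac_le)
    then show "2 * s / psi y \<le> 2 * g s" by (simp add: div_psi)
  qed
  have "(\<integral>\<^sup>+s\<in>{0<..y}. ennreal (g x - g s) \<partial>lborel) + (\<integral>\<^sup>+s\<in>{0<..x}. ennreal (g y - g s) \<partial>lborel)
       + (\<integral>\<^sup>+s\<in>{0<..y}. ennreal (2 * g s - 2 * s / psi y) \<partial>lborel)
      = (\<integral>\<^sup>+s\<in>{0<..y}. ennreal ((g x - g s) + (g y - g s) + (2 * g s - 2 * s / psi y)) \<partial>lborel)"
    unfolding nn_set_integral_g_sub_restrict[OF y x] using pointwise gy_le_gx
    by (intro nn_set_integral_ennreal_add3[symmetric]) force+
  \<comment> \<open>the terms \<open>g s\<close> cancel, leaving an affine function of \<open>s\<close>\<close>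
  also have "\<dots> = (\<integral>\<^sup>+s\<in>{0<..y}. ennreal ((g x + g y) + (- 2 / psi y) * s) \<partial>lborel)"
    by (rule nn_integral_cong) (simp add: algebra_simps)
  also have "\<dots> = ennreal ((g x + g y) * (y - 0) + (- 2 / psi y) * (y\<^sup>2 - 0\<^sup>2) / 2)"
  proof (rule nn_set_integral_has_integral[OF _ _ has_integral_linear_real])
    fix s assume s: "s \<in> {0..y}"
    have "2 * s / psi y \<le> 2 * y / psi y"
      using s y x psi_nonneg[of y] by (intro divide_right_mono) auto
    also have "\<dots> \<le> g x + g y" using gy_le_gx div_psi[of y] by simp
    finally show "0 \<le> (g x + g y) + (- 2 / psi y) * s" by simp
  qed (use y in auto)
  also have "(g x + g y) * (y - 0) + (- 2 / psi y) * (y\<^sup>2 - 0\<^sup>2) / 2 = y * g x + y * (g y - y / psi y)"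
    by (simp add: algebra_simps power2_eq_square)
  also have "\<dots> = y * g x"
    by (simp add: div_psi)
  finally show ?thesis .
qed

lemma S_diag_eq: "x \<in> {0..1} \<Longrightarrow> y \<in> {0..1} \<Longrightarrow> S_diag \<delta> x y = (if y \<le> x then y * g x else x * g y)"
  by (simp add: S_diag_def g_def d_eq)

lemma emeasure_mu_rectangle:
  assumes x: "x \<in> {0..1}" and y: "y \<in> {0..1}"
  shows "emeasure mu ({0..x} \<times> {0..y}) = ennreal (S_diag \<delta> x y)"
proof -
  have [measurable]: "{0..x} \<times> {0..y} \<in> sets borel"
    by (intro borel_closed closed_Times) auto
  have "emeasure mu ({0..x} \<times> {0..y}) = (\<integral>\<^sup>+p. indicator ({0..x} \<times> {0..y}) p \<partial>mu)"
    by (simp add: sets_mu)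
  also have "\<dots> = (\<integral>\<^sup>+z\<in>above_g. indicator ({0..x} \<times> {0..y}) (q (snd z), fst z) \<partial>lborel)
       + (\<integral>\<^sup>+z\<in>above_g. indicator ({0..x} \<times> {0..y}) (fst z, q (snd z)) \<partial>lborel)
       + (\<integral>\<^sup>+z\<in>above_psi. ennreal (2 * fst z / (snd z)\<^sup>2)
            * indicator ({0..x} \<times> {0..y}) (r (snd z), r (snd z)) \<partial>lborel)"
    by (rule nn_integral_mu) measurable
  also have "\<dots> = (\<integral>\<^sup>+s\<in>{0<..y}. ennreal (g x - g s) \<partial>lborel) + (\<integral>\<^sup>+s\<in>{0<..x}. ennreal (g y - g s) \<partial>lborel)
       + (\<integral>\<^sup>+s\<in>{0<..min x y}. ennreal (2 * g s - 2 * s / psi (min x y)) \<partial>lborel)"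
  proof -
    have swap: "(\<integral>\<^sup>+z\<in>above_g. indicator ({0..x} \<times> {0..y}) (fst z, q (snd z)) \<partial>lborel)
        = (\<integral>\<^sup>+z\<in>above_g. indicator ({0..y} \<times> {0..x}) (q (snd z), fst z) \<partial>lborel)"
      by (rule nn_integral_cong) (auto simp: indicator_def)
    have diag: "(\<integral>\<^sup>+z\<in>above_psi. ennreal (2 * fst z / (snd z)\<^sup>2)
            * indicator ({0..x} \<times> {0..y}) (r (snd z), r (snd z)) \<partial>lborel)
        = (\<integral>\<^sup>+z\<in>above_psi. ennreal (2 * fst z / (snd z)\<^sup>2) * indicator {0..min x y} (r (snd z)) \<partial>lborel)"
      by (rule nn_integral_cong) (simp add: indicator_def)
    have "min x y \<in> {0..1}" using x y by (auto simp: min_def)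
    then show ?thesis
      by (simp only: swap diag lower_piece_rectangle[OF x y] lower_piece_rectangle[OF y x]
          diagonal_piece_rectangle)
  qed
  also have "\<dots> = ennreal (S_diag \<delta> x y)"
  proof (cases "y \<le> x")
    case True
    then show ?thesis using rectangle_pieces_sum[of y x] x y by (simp add: S_diag_eq)
  next
    case False
    then show ?thesis using rectangle_pieces_sum[of x y] x y by (simp add: S_diag_eq add_ac)
  qed
  finally show ?thesis .
qed

lemma mu_outside_unit_square: "emeasure mu (- ({0..1} \<times> {0..1})) = 0"
proof -
  let ?C = "- ({0..1::real} \<times> {0..1::real})"
  have [measurable]: "?C \<in> sets borel"
    by (intro borel_open open_Compl closed_Times) auto
  have zero: "indicator ?C (q (snd z), fst z) * indicator above_g z = (0 :: ennreal)"
    "indicator ?C (fst z, q (snd z)) * indicator above_g z = (0 :: ennreal)"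
    "ennreal (2 * fst z / (snd z)\<^sup>2) * indicator ?C (r (snd z), r (snd z)) * indicator above_psi z = 0"
    for z
    using q_bounds[of "snd z"] r_bounds[of "snd z"]
    by (auto simp: indicator_def above_g_def above_psi_def split: prod.splits)
  have "emeasure mu ?C = (\<integral>\<^sup>+p. indicator ?C p \<partial>mu)"
    by (simp add: sets_mu)
  also have "\<dots> = 0"
    by (subst nn_integral_mu) (measurable, simp only: zero nn_integral_const add_0 mult_zero_left)
  finally show ?thesis .
qed

lemma copula_measure_S_diag: "copula_measure (S_diag \<delta>) = mu"
  by (rule copula_measure_eqI)
    (simp add: is_copula_measure_def sets_mu mu_outside_unit_square emeasure_mu_rectangle)

subsection \<open>Kendall's tau and Spearman's rho\<close>

lemma S_diag_d_measurable [measurable]: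
  "(\<lambda>p. S_diag d (fst p) (snd p)) \<in> borel_measurable borel"
  unfolding S_diag_def by (rule measurable_pair_borel_real) measurable

lemma S_diag_d_nonneg: "x \<in> {0..1} \<Longrightarrow> y \<in> {0..1} \<Longrightarrow> 0 \<le> S_diag d x y"
  using d_nonneg[of x] d_nonneg[of y] by (auto simp: S_diag_def)

lemma S_diag_d_eq: "x \<in> {0..1} \<Longrightarrow> y \<in> {0..1} \<Longrightarrow> S_diag \<delta> x y = S_diag d x y"
  by (simp add: S_diag_def d_eq)

lemma S_diag_above_g:
  assumes "(s, v) \<in> above_g"
  shows "S_diag d (q v) s = s * v" "S_diag d s (q v) = s * v"
  using above_gD[OF assms] by (auto simp: S_diag_def g_def simp flip: times_divide_eq_right)

lemma S_diag_above_psi: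
  assumes "(s, u) \<in> above_psi"
  shows "S_diag d (r u) (r u) = (r u)\<^sup>2 / u"
proof -
  have u: "u \<in> {0<..1}" and "0 < r u" using assms by (auto simp: above_psi_iff)
  then have "psi (r u) = u" "0 < d (r u)" using psi_r[of u] r_bounds(2)[of u] d_pos[of "r u"] by auto
  then show ?thesis using \<open>0 < r u\<close> u by (auto simp: S_diag_def psi_def field_simps)
qed

definition tau_moment :: ennreal where
  "tau_moment = (\<integral>\<^sup>+u\<in>{0<..1}. ennreal (u * g (r u) ^ 4) \<partial>lborel)"

definition rho_moment :: ennreal where
  "rho_moment = (\<integral>\<^sup>+u\<in>{0<..1}. ennreal (u\<^sup>2 * g (r u) ^ 4) \<partial>lborel)"

lemma nn_integral_above_g_product:
  "(\<integral>\<^sup>+z\<in>above_g. ennreal (fst z * snd z) \<partial>lborel)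
     = (\<integral>\<^sup>+s\<in>{0<..1}. ennreal (s * (1 - (g s)\<^sup>2) / 2) \<partial>lborel)"
proof -
  have inner: "(\<integral>\<^sup>+v. ennreal (s * v) * indicator above_g (s, v) \<partial>lborel)
      = ennreal (s * (1 - (g s)\<^sup>2) / 2) * indicator {0<..1} s" for s
  proof (cases "s \<in> {0<..1}")
    case True
    have "(\<integral>\<^sup>+v. ennreal (s * v) * indicator above_g (s, v) \<partial>lborel)
        = (\<integral>\<^sup>+v\<in>{g s<..1}. ennreal (0 + s * v) \<partial>lborel)"
      by (rule nn_integral_cong) (use True in \<open>auto simp: above_g_def indicator_def\<close>)
    also have "\<dots> = ennreal (0 * (1 - g s) + s * (1\<^sup>2 - (g s)\<^sup>2) / 2)"
      by (rule nn_set_integral_has_integral[OF _ _ has_integral_linear_real])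
        (use True g_nonneg[of s] g_le_1[of s] in auto)
    finally show ?thesis using True by simp
  next
    case False
    then show ?thesis by (auto simp: above_g_def indicator_def)
  qed
  have "(\<lambda>z. ennreal (fst z * snd z) * indicator above_g z) \<in> borel_measurable (borel \<Otimes>\<^sub>M borel)"
    by measurable
  from lborel_pair_nn_integral_fst[OF this] show ?thesis by (simp add: inner)
qed

lemma nn_integral_above_psi_diagonal:
  "(\<integral>\<^sup>+z\<in>above_psi. ennreal (2 * fst z / (snd z)\<^sup>2) * ennreal (S_diag d (r (snd z)) (r (snd z))) \<partial>lborel)
     = tau_moment"
proof -
  have integrand: "ennreal (2 * fst z / (snd z)\<^sup>2) * ennreal (S_diag d (r (snd z)) (r (snd z))) * indicator above_psi z
      = ennreal (2 * (r (snd z))\<^sup>2 / snd z ^ 3 * fst z ^ 1) * indicator above_psi z" for z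
  proof (cases "z \<in> above_psi")
    case True
    obtain s u where z: "z = (s, u)" by (cases z)
    from True have True: "(s, u) \<in> above_psi" by (simp add: z)
    then have "0 < s" "0 < u" by (auto simp: above_psi_iff)
    then have "ennreal (2 * s / u\<^sup>2) * ennreal ((r u)\<^sup>2 / u) = ennreal (2 * s / u\<^sup>2 * ((r u)\<^sup>2 / u))"
      by (intro ennreal_mult[symmetric]) auto
    then show ?thesis using True S_diag_above_psi[OF True]
      by (simp add: z power2_eq_square power3_eq_cube mult_ac)
  qed simp
  have slice: "(\<integral>\<^sup>+s. ennreal (2 * (r u)\<^sup>2 / u ^ 3 * s ^ 1) * indicator above_psi (s, u) \<partial>lborel)
      = ennreal (u * g (r u) ^ 4) * indicator {0<..1} u" for u
  proof -
    have "2 * (r u)\<^sup>2 / u ^ 3 * r u ^ 2 / 2 = u * g (r u) ^ 4" if "u \<in> {0<..1}"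
      unfolding r_power_eq[OF that, of 2] using that
      by (simp add: field_simps power2_eq_square power3_eq_cube power4_eq_xxxx)
    moreover have "0 \<le> 2 * (r u)\<^sup>2 / u ^ 3" if "u \<in> {0<..1}"
      using that by simp
    ultimately show ?thesis
      using nn_integral_above_psi_fixed_u[of "2 * (r u)\<^sup>2 / u ^ 3" 1 u]
      by (cases "u \<in> {0<..1}") (auto simp: numeral_2_eq_2 above_psi_iff indicator_def)
  qed
  have m: "(\<lambda>z. ennreal (2 * (r (snd z))\<^sup>2 / snd z ^ 3 * fst z ^ 1) * indicator above_psi z)
      \<in> borel_measurable (borel \<Otimes>\<^sub>M borel)"
    by measurable
  have "(\<integral>\<^sup>+z\<in>above_psi. ennreal (2 * fst z / (snd z)\<^sup>2) * ennreal (S_diag d (r (snd z)) (r (snd z))) \<partial>lborel)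
      = (\<integral>\<^sup>+z. ennreal (2 * (r (snd z))\<^sup>2 / snd z ^ 3 * fst z ^ 1) * indicator above_psi z \<partial>lborel)"
    by (rule nn_integral_cong) (rule integrand)
  also have "\<dots> = (\<integral>\<^sup>+u. \<integral>\<^sup>+s. ennreal (2 * (r u)\<^sup>2 / u ^ 3 * s ^ 1) * indicator above_psi (s, u) \<partial>lborel \<partial>lborel)"
    using lborel_pair_nn_integral_snd[OF m] by (simp only: fst_conv snd_conv)
  also have "\<dots> = tau_moment"
    unfolding slice tau_moment_def ..
  finally show ?thesis .
qed

lemma nn_integral_S_diag_mu:
  "(\<integral>\<^sup>+p. ennreal (S_diag d (fst p) (snd p)) \<partial>mu)
     = (\<integral>\<^sup>+s\<in>{0<..1}. ennreal (s * (1 - (g s)\<^sup>2) / 2) \<partial>lborel)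
     + (\<integral>\<^sup>+s\<in>{0<..1}. ennreal (s * (1 - (g s)\<^sup>2) / 2) \<partial>lborel) + tau_moment"
proof -
  have "(\<integral>\<^sup>+z\<in>above_g. ennreal (S_diag d (q (snd z)) (fst z)) \<partial>lborel)
      = (\<integral>\<^sup>+z\<in>above_g. ennreal (fst z * snd z) \<partial>lborel)"
    "(\<integral>\<^sup>+z\<in>above_g. ennreal (S_diag d (fst z) (q (snd z))) \<partial>lborel)
      = (\<integral>\<^sup>+z\<in>above_g. ennreal (fst z * snd z) \<partial>lborel)"
    by (auto intro!: nn_integral_cong simp: indicator_def S_diag_above_g)
  then show ?thesis
    by (simp add: nn_integral_mu nn_integral_above_g_product nn_integral_above_psi_diagonal)
qed

definition integral_x_d :: ennreal where
  "integral_x_d = (\<integral>\<^sup>+x\<in>{0<..1}. ennreal (x * d x) \<partial>lborel)"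

definition integral_d2_div_x :: ennreal where
  "integral_d2_div_x = (\<integral>\<^sup>+x\<in>{0<..1}. ennreal ((d x)\<^sup>2 / x) \<partial>lborel)"

lemma nn_integral_layer_cake_psi:
  fixes k K :: "real \<Rightarrow> real"
  assumes K: "\<And>a. a \<in> {0<..1} \<Longrightarrow> (k has_integral K a) {a..1}"
    and k_nonneg: "\<And>u. u \<in> {0<..1} \<Longrightarrow> 0 \<le> k u"
    and [measurable]: "k \<in> borel_measurable borel"
  shows "(\<integral>\<^sup>+x\<in>{0<..1}. ennreal (x ^ 3 * K (psi x)) \<partial>lborel)
       = (\<integral>\<^sup>+u\<in>{0<..1}. ennreal (k u * r u ^ 4 / 4) \<partial>lborel)"
proof -
  have inner_u: "(\<integral>\<^sup>+u. ennreal (x ^ 3 * k u) * indicator above_psi (x, u) \<partial>lborel)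
      = ennreal (x ^ 3 * K (psi x)) * indicator {0<..1} x" for x
  proof (cases "x \<in> {0<..1}")
    case True
    then have "psi x \<in> {0<..1}" using psi_pos psi_le_1 by auto
    with True show ?thesis
      using nn_integral_above_psi_fixed_s[OF True K] k_nonneg by simp
  next
    case False
    then show ?thesis by (auto simp: above_psi_def indicator_def)
  qed
  have inner_x: "(\<integral>\<^sup>+x. ennreal (x ^ 3 * k u) * indicator above_psi (x, u) \<partial>lborel)
      = ennreal (k u * r u ^ 4 / 4) * indicator {0<..1} u" for u
  proof (cases "u \<in> {0<..1}")
    case True
    then show ?thesis
      using nn_integral_above_psi_fixed_u[of "k u" 3 u] k_nonneg[OF True] by (simp add: mult.commute)
  next
    case False
    then show ?thesis by (auto simp: above_psi_iff indicator_def)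
  qed
  have m: "(\<lambda>z. ennreal (fst z ^ 3 * k (snd z)) * indicator above_psi z) \<in> borel_measurable (borel \<Otimes>\<^sub>M borel)"
    by measurable
  have "(\<integral>\<^sup>+x\<in>{0<..1}. ennreal (x ^ 3 * K (psi x)) \<partial>lborel)
      = (\<integral>\<^sup>+x. \<integral>\<^sup>+u. ennreal (x ^ 3 * k u) * indicator above_psi (x, u) \<partial>lborel \<partial>lborel)"
    unfolding inner_u ..
  also have "\<dots> = (\<integral>\<^sup>+u. \<integral>\<^sup>+x. ennreal (x ^ 3 * k u) * indicator above_psi (x, u) \<partial>lborel \<partial>lborel)"
    using lborel_pair_nn_integral_fst[OF m] lborel_pair_nn_integral_snd[OF m] by (simp only: fst_conv snd_conv)
  also have "\<dots> = (\<integral>\<^sup>+u\<in>{0<..1}. ennreal (k u * r u ^ 4 / 4) \<partial>lborel)"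
    unfolding inner_x ..
  finally show ?thesis .
qed

lemma integral_x_d_eq: "integral_x_d = ennreal (1/4) + ennreal (1/4) * rho_moment"
proof -
  have "integral_x_d = (\<integral>\<^sup>+x\<in>{0<..1}. ennreal (1 * x ^ 3 + x ^ 3 * (1 / psi x - 1 / 1)) \<partial>lborel)"
    unfolding integral_x_d_def
    by (rule nn_integral_cong) (auto simp: indicator_def psi_def field_simps power2_eq_square power3_eq_cube)
  also have "\<dots> = ennreal (1/4) + (\<integral>\<^sup>+x\<in>{0<..1}. ennreal (x ^ 3 * (1 / psi x - 1 / 1)) \<partial>lborel)"
    using psi_pos psi_le_1 nn_set_integral_power_unit[of 1 3]
    by (subst nn_set_integral_ennreal_add) (auto simp: numeral_eq_Suc)
  also have "(\<integral>\<^sup>+x\<in>{0<..1}. ennreal (x ^ 3 * (1 / psi x - 1 / 1)) \<partial>lborel)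
      = (\<integral>\<^sup>+u\<in>{0<..1}. ennreal (1 / u\<^sup>2 * r u ^ 4 / 4) \<partial>lborel)"
  proof (rule nn_integral_layer_cake_psi)
    fix a :: real assume "a \<in> {0<..1}"
    then show "((\<lambda>u. 1 / u\<^sup>2) has_integral (1 / a - 1 / 1)) {a..1}"
      using has_integral_inverse_square[of a 1] by simp
  qed auto
  also have "\<dots> = (\<integral>\<^sup>+u\<in>{0<..1}. ennreal (1/4 * (u\<^sup>2 * g (r u) ^ 4)) \<partial>lborel)"
  proof (rule nn_integral_cong)
    fix u :: real
    have "1 / u\<^sup>2 * r u ^ 4 / 4 = 1/4 * (u\<^sup>2 * g (r u) ^ 4)" if "u \<in> {0<..1}"
      unfolding r_power_eq[OF that] using that by (simp add: field_simps power2_eq_square power4_eq_xxxx)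
    then show "ennreal (1 / u\<^sup>2 * r u ^ 4 / 4) * indicator {0<..1} u
        = ennreal (1/4 * (u\<^sup>2 * g (r u) ^ 4)) * indicator {0<..1} u"
      by (auto simp: indicator_def)
  qed
  also have "\<dots> = ennreal (1/4) * rho_moment"
    unfolding rho_moment_def by (rule nn_set_integral_ennreal_cmult) auto
  finally show ?thesis .
qed

lemma integral_d2_div_x_eq: "integral_d2_div_x = ennreal (1/4) + ennreal (1/2) * tau_moment"
proof -
  have "integral_d2_div_x = (\<integral>\<^sup>+x\<in>{0<..1}. ennreal (1 * x ^ 3 + x ^ 3 * (1 / (psi x)\<^sup>2 - 1 / 1\<^sup>2)) \<partial>lborel)"
    unfolding integral_d2_div_x_def
    by (rule nn_integral_cong) (auto simp: indicator_def psi_def field_simps power2_eq_square power3_eq_cube)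
  also have "\<dots> = ennreal (1/4) + (\<integral>\<^sup>+x\<in>{0<..1}. ennreal (x ^ 3 * (1 / (psi x)\<^sup>2 - 1 / 1\<^sup>2)) \<partial>lborel)"
  proof (subst nn_set_integral_ennreal_add)
    fix x :: real assume "x \<in> {0<..1}"
    then have "1 \<le> 1 / (psi x)\<^sup>2" using psi_pos[of x] psi_le_1[of x] by (simp add: power_le_one)
    then show "0 \<le> x ^ 3 * (1 / (psi x)\<^sup>2 - 1 / 1\<^sup>2)" using \<open>x \<in> {0<..1}\<close> by simp
  qed (use nn_set_integral_power_unit[of 1 3] in \<open>auto simp: numeral_eq_Suc\<close>)
  also have "(\<integral>\<^sup>+x\<in>{0<..1}. ennreal (x ^ 3 * (1 / (psi x)\<^sup>2 - 1 / 1\<^sup>2)) \<partial>lborel)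
      = (\<integral>\<^sup>+u\<in>{0<..1}. ennreal (2 / u ^ 3 * r u ^ 4 / 4) \<partial>lborel)"
  proof (rule nn_integral_layer_cake_psi)
    fix a :: real assume "a \<in> {0<..1}"
    then show "((\<lambda>u. 2 / u ^ 3) has_integral (1 / a\<^sup>2 - 1 / 1\<^sup>2)) {a..1}"
      using has_integral_inverse_cube[of a 1] by simp
  qed auto
  also have "\<dots> = (\<integral>\<^sup>+u\<in>{0<..1}. ennreal (1/2 * (u * g (r u) ^ 4)) \<partial>lborel)"
  proof (rule nn_integral_cong)
    fix u :: real
    have "2 / u ^ 3 * r u ^ 4 / 4 = 1/2 * (u * g (r u) ^ 4)" if "u \<in> {0<..1}"
      unfolding r_power_eq[OF that] using that by (simp add: field_simps power3_eq_cube power4_eq_xxxx)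
    then show "ennreal (2 / u ^ 3 * r u ^ 4 / 4) * indicator {0<..1} u
        = ennreal (1/2 * (u * g (r u) ^ 4)) * indicator {0<..1} u"
      by (auto simp: indicator_def)
  qed
  also have "\<dots> = ennreal (1/2) * tau_moment"
    unfolding tau_moment_def by (rule nn_set_integral_ennreal_cmult) auto
  finally show ?thesis .
qed

lemma integral_d2_div_x_le_1: "integral_d2_div_x \<le> 1"
proof -
  have "(d x)\<^sup>2 / x \<le> 1" if x: "x \<in> {0<..1}" for x
  proof -
    have "(d x)\<^sup>2 \<le> x\<^sup>2" using d_nonneg[of x] d_le[of x] x by (intro power_mono) auto
    then have "(d x)\<^sup>2 / x \<le> x" using x by (simp add: divide_le_eq power2_eq_square)
    with x show ?thesis by (metis greaterThanAtMost_iff order_trans)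
  qed
  then have "integral_d2_div_x \<le> ennreal 1 * emeasure lborel {0<..1::real}"
    unfolding integral_d2_div_x_def by (intro nn_set_integral_ennreal_bounded) auto
  then show ?thesis by simp
qed

lemma nn_integral_lower_pieces_complement:
  "(\<integral>\<^sup>+s\<in>{0<..1}. ennreal (s * (1 - (g s)\<^sup>2) / 2) \<partial>lborel)
     + (\<integral>\<^sup>+s\<in>{0<..1}. ennreal (s * (1 - (g s)\<^sup>2) / 2) \<partial>lborel) + integral_d2_div_x = ennreal (1/2)"
proof -
  have nonneg: "0 \<le> s * (1 - (g s)\<^sup>2) / 2" if "s \<in> {0<..1}" for s
    using that g_nonneg[of s] g_le_1[of s] by (simp add: power_le_one)
  have "(\<integral>\<^sup>+s\<in>{0<..1}. ennreal (s * (1 - (g s)\<^sup>2) / 2) \<partial>lborel)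
      + (\<integral>\<^sup>+s\<in>{0<..1}. ennreal (s * (1 - (g s)\<^sup>2) / 2) \<partial>lborel) + integral_d2_div_x
      = (\<integral>\<^sup>+s\<in>{0<..1}. ennreal (s * (1 - (g s)\<^sup>2) / 2 + s * (1 - (g s)\<^sup>2) / 2 + (d s)\<^sup>2 / s) \<partial>lborel)"
    unfolding integral_d2_div_x_def using nonneg d_nonneg
    by (intro nn_set_integral_ennreal_add3[symmetric]) auto
  also have "\<dots> = (\<integral>\<^sup>+s\<in>{0<..1}. ennreal (1 * s ^ 1) \<partial>lborel)"
    by (rule nn_integral_cong) (auto simp: indicator_def g_def field_simps power2_eq_square)
  also have "\<dots> = ennreal (1/2)"
    using nn_set_integral_power_unit[of 1 1] by simp
  finally show ?thesis .
qed

lemma integral_d2_div_x_twice: "integral_d2_div_x + integral_d2_div_x = ennreal (1/2) + tau_moment"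
proof -
  have quarters: "ennreal (1/4) + ennreal (1/4) = ennreal (1/2)"
    and halves: "ennreal (1/2) + ennreal (1/2) = 1"
    by (subst ennreal_plus[symmetric]; simp)+
  have "integral_d2_div_x + integral_d2_div_x
      = (ennreal (1/4) + ennreal (1/4)) + (ennreal (1/2) + ennreal (1/2)) * tau_moment"
    unfolding integral_d2_div_x_eq by (simp only: distrib_right distrib_left ac_simps)
  also have "\<dots> = ennreal (1/2) + tau_moment"
    by (simp only: quarters halves mult_1)
  finally show ?thesis .
qed

lemma nn_integral_S_diag_mu_eq: "(\<integral>\<^sup>+p. ennreal (S_diag d (fst p) (snd p)) \<partial>mu) = integral_d2_div_x"
proof -
  define L where "L = (\<integral>\<^sup>+s\<in>{0<..1}. ennreal (s * (1 - (g s)\<^sup>2) / 2) \<partial>lborel)"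
  have "integral_d2_div_x + (L + L + tau_moment) = integral_d2_div_x + integral_d2_div_x"
    unfolding integral_d2_div_x_twice nn_integral_lower_pieces_complement[folded L_def, symmetric]
    by (simp only: ac_simps)
  moreover have "integral_d2_div_x \<noteq> \<infinity>"
    using integral_d2_div_x_le_1 by (auto simp: top_unique)
  ultimately have "L + L + tau_moment = integral_d2_div_x"
    by (simp add: ennreal_add_left_cancel)
  then show ?thesis by (simp add: nn_integral_S_diag_mu L_def)
qed

lemma nn_set_integral_triangle:
  assumes x: "x \<in> {0<..1}" and "{0<..<x} \<subseteq> S" "S \<subseteq> {0..x}"
  shows "(\<integral>\<^sup>+y\<in>S. ennreal (y * g x) \<partial>lborel) = ennreal (x * d x / 2)"
proof -
  have "(\<integral>\<^sup>+y\<in>S. ennreal (y * g x) \<partial>lborel) = (\<integral>\<^sup>+y\<in>S. ennreal (0 + g x * y) \<partial>lborel)"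
    by (simp add: mult.commute)
  also have "\<dots> = ennreal (0 * (x - 0) + g x * (x\<^sup>2 - 0\<^sup>2) / 2)"
    by (rule nn_set_integral_has_integral[OF assms(2,3) has_integral_linear_real])
      (use x g_nonneg[of x] in auto)
  also have "0 * (x - 0) + g x * (x\<^sup>2 - 0\<^sup>2) / 2 = x * d x / 2"
    using x by (simp add: g_def power2_eq_square)
  finally show ?thesis .
qed

lemma nn_integral_below_diagonal:
  "(\<integral>\<^sup>+z. (if 0 < fst z \<and> fst z \<le> 1 \<and> 0 \<le> snd z \<and> snd z \<le> fst z
        then ennreal (snd z * g (fst z)) else 0) \<partial>lborel)
     = (\<integral>\<^sup>+x\<in>{0<..1}. ennreal (x * d x / 2) \<partial>lborel)"
proof -
  have "(\<integral>\<^sup>+y. (if 0 < x \<and> x \<le> 1 \<and> 0 \<le> y \<and> y \<le> x then ennreal (y * g x) else 0) \<partial>lborel)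
      = ennreal (x * d x / 2) * indicator {0<..1} x" for x
  proof (cases "x \<in> {0<..1}")
    case True
    have "(\<integral>\<^sup>+y. (if 0 < x \<and> x \<le> 1 \<and> 0 \<le> y \<and> y \<le> x then ennreal (y * g x) else 0) \<partial>lborel)
        = (\<integral>\<^sup>+y\<in>{0..x}. ennreal (y * g x) \<partial>lborel)"
      using True by (intro nn_integral_cong) (simp add: indicator_def)
    also have "\<dots> = ennreal (x * d x / 2)" by (rule nn_set_integral_triangle[OF True]) auto
    finally show ?thesis using True by simp
  qed auto
  then show ?thesis by (simp add: lborel_pair_nn_integral_fst cong: if_cong)
qed

lemma nn_integral_above_diagonal:
  "(\<integral>\<^sup>+z. (if 0 < snd z \<and> snd z \<le> 1 \<and> 0 \<le> fst z \<and> fst z < snd z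
        then ennreal (fst z * g (snd z)) else 0) \<partial>lborel)
     = (\<integral>\<^sup>+y\<in>{0<..1}. ennreal (y * d y / 2) \<partial>lborel)"
proof -
  have "(\<integral>\<^sup>+x. (if 0 < y \<and> y \<le> 1 \<and> 0 \<le> x \<and> x < y then ennreal (x * g y) else 0) \<partial>lborel)
      = ennreal (y * d y / 2) * indicator {0<..1} y" for y
  proof (cases "y \<in> {0<..1}")
    case True
    have "(\<integral>\<^sup>+x. (if 0 < y \<and> y \<le> 1 \<and> 0 \<le> x \<and> x < y then ennreal (x * g y) else 0) \<partial>lborel)
        = (\<integral>\<^sup>+x\<in>{0..<y}. ennreal (x * g y) \<partial>lborel)"
      using True by (intro nn_integral_cong) (simp add: indicator_def)
    also have "\<dots> = ennreal (y * d y / 2)" by (rule nn_set_integral_triangle[OF True]) auto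
    finally show ?thesis using True by simp
  qed auto
  then show ?thesis by (simp add: lborel_pair_nn_integral_snd cong: if_cong)
qed

lemma nn_integral_S_diag_unit_square:
  "(\<integral>\<^sup>+p\<in>{0..1} \<times> {0..1}. ennreal (S_diag d (fst p) (snd p)) \<partial>lborel) = integral_x_d"
proof -
  have split: "ennreal (S_diag d (fst p) (snd p)) * indicator ({0..1} \<times> {0..1}) p
      = (if 0 < fst p \<and> fst p \<le> 1 \<and> 0 \<le> snd p \<and> snd p \<le> fst p then ennreal (snd p * g (fst p)) else 0)
      + (if 0 < snd p \<and> snd p \<le> 1 \<and> 0 \<le> fst p \<and> fst p < snd p then ennreal (fst p * g (snd p)) else 0)"
    for p
    by (cases p; cases "snd p \<le> fst p"; cases "fst p = 0")
      (auto simp: S_diag_def g_def indicator_def mult.commute)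
  have "(\<integral>\<^sup>+p\<in>{0..1} \<times> {0..1}. ennreal (S_diag d (fst p) (snd p)) \<partial>lborel)
      = (\<integral>\<^sup>+p. (if 0 < fst p \<and> fst p \<le> 1 \<and> 0 \<le> snd p \<and> snd p \<le> fst p
              then ennreal (snd p * g (fst p)) else 0) \<partial>lborel)
      + (\<integral>\<^sup>+p. (if 0 < snd p \<and> snd p \<le> 1 \<and> 0 \<le> fst p \<and> fst p < snd p
              then ennreal (fst p * g (snd p)) else 0) \<partial>lborel)"
    unfolding split
    by (rule nn_integral_add) (unfold measurable_lborel2; rule measurable_pair_borel_real; measurable)+
  also have "\<dots> = (\<integral>\<^sup>+x\<in>{0<..1}. ennreal (x * d x / 2) \<partial>lborel) + (\<integral>\<^sup>+x\<in>{0<..1}. ennreal (x * d x / 2) \<partial>lborel)"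
    unfolding nn_integral_below_diagonal nn_integral_above_diagonal ..
  also have "\<dots> = (\<integral>\<^sup>+x\<in>{0<..1}. ennreal (x * d x / 2 + x * d x / 2) \<partial>lborel)"
    using d_nonneg by (intro nn_set_integral_ennreal_add[symmetric]) auto
  also have "\<dots> = integral_x_d"
    by (simp add: integral_x_d_def)
  finally show ?thesis .
qed

lemma spearman_rho_eq_integral_x_d: "spearman_rho (S_diag \<delta>) = 12 * enn2real integral_x_d - 3"
proof -
  let ?K = "{0..1::real} \<times> {0..1::real}"
  have [measurable]: "?K \<in> sets borel" by (intro borel_closed closed_Times) auto
  have "(LINT p:?K|lborel. S_diag \<delta> (fst p) (snd p)) = (LINT p:?K|lborel. S_diag d (fst p) (snd p))"
    by (rule set_lebesgue_integral_cong) (auto simp: S_diag_d_eq)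
  also have "\<dots> = integral\<^sup>L lborel (\<lambda>p. indicator ?K p * S_diag d (fst p) (snd p))"
    by (simp add: set_lebesgue_integral_def)
  also have "\<dots> = enn2real (\<integral>\<^sup>+p. ennreal (indicator ?K p * S_diag d (fst p) (snd p)) \<partial>lborel)"
    by (rule integral_eq_nn_integral)
      (auto simp: indicator_def S_diag_d_nonneg intro: measurable_pair_borel_real)
  also have "(\<integral>\<^sup>+p. ennreal (indicator ?K p * S_diag d (fst p) (snd p)) \<partial>lborel)
      = (\<integral>\<^sup>+p\<in>?K. ennreal (S_diag d (fst p) (snd p)) \<partial>lborel)"
    by (rule nn_integral_cong) (simp add: indicator_def)
  finally show ?thesis
    by (simp add: spearman_rho_def nn_integral_S_diag_unit_square)
qed

lemma AE_mu_unit_square: "AE p in mu. p \<in> {0..1} \<times> {0..1}"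
proof (rule AE_I')
  show "- ({0..1} \<times> {0..1}) \<in> null_sets mu"
    using mu_outside_unit_square
    by (simp add: null_sets_def sets_mu) (intro borel_open open_Compl closed_Times closed_atLeastAtMost)
qed auto

lemma kendall_tau_eq_integral_d2_div_x:
  assumes "(\<lambda>p. S_diag \<delta> (fst p) (snd p)) \<in> borel_measurable borel"
  shows "kendall_tau (S_diag \<delta>) = 4 * enn2real integral_d2_div_x - 1"
proof -
  have "integral\<^sup>L mu (\<lambda>p. S_diag \<delta> (fst p) (snd p)) = integral\<^sup>L mu (\<lambda>p. S_diag d (fst p) (snd p))"
    using AE_mu_unit_square assms
    by (intro integral_cong_AE) (auto simp: S_diag_d_eq measurable_cong_sets[OF sets_mu refl])
  also have "\<dots> = enn2real (\<integral>\<^sup>+p. ennreal (S_diag d (fst p) (snd p)) \<partial>mu)"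
    using AE_mu_unit_square
    by (intro integral_eq_nn_integral)
      (auto simp: measurable_cong_sets[OF sets_mu refl] elim!: eventually_mono intro: S_diag_d_nonneg)
  finally show ?thesis
    by (simp add: kendall_tau_def copula_measure_S_diag nn_integral_S_diag_mu_eq)
qed

text \<open>Since \<delta> is arbitrary outside [0,1], \<open>S_diag \<delta>\<close> need not be Borel measurable on the plane;
  then the Bochner integral in the definition of Kendall's tau is 0.\<close>

lemma kendall_tau_nonmeasurable:
  assumes "(\<lambda>p. S_diag \<delta> (fst p) (snd p)) \<notin> borel_measurable borel"
  shows "kendall_tau (S_diag \<delta>) = - 1"
proof -
  have "\<not> integrable mu (\<lambda>p. S_diag \<delta> (fst p) (snd p))"
    using assms by (auto simp: measurable_cong_sets[OF sets_mu refl] dest: borel_measurable_integrable)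
  then show ?thesis
    by (simp add: kendall_tau_def copula_measure_S_diag not_integrable_integral_eq)
qed

lemma rho_moment_le_1: "rho_moment \<le> 1"
  and tau_moment_le_1: "tau_moment \<le> 1"
proof -
  have "g (r u) ^ 4 \<le> 1" for u
    using g_nonneg[of "r u"] g_le_1[of "r u"] r_bounds[of u] by (simp add: power_le_one)
  moreover have "u\<^sup>2 \<le> 1" if "u \<in> {0<..1}" for u :: real
    using that by (simp add: power_le_one)
  ultimately have bound: "u\<^sup>2 * g (r u) ^ 4 \<le> 1" "u * g (r u) ^ 4 \<le> 1" if "u \<in> {0<..1}" for u
    using that by (auto intro: mult_le_one)
  have "rho_moment \<le> ennreal 1 * emeasure lborel {0<..1::real}"
    unfolding rho_moment_def by (rule nn_set_integral_ennreal_bounded) (use bound in auto)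
  then show "rho_moment \<le> 1" by simp
  have "tau_moment \<le> ennreal 1 * emeasure lborel {0<..1::real}"
    unfolding tau_moment_def by (rule nn_set_integral_ennreal_bounded) (use bound in auto)
  then show "tau_moment \<le> 1" by simp
qed

lemma mono_on_g_r: "mono_on {0<..1} (\<lambda>u. g (r u) ^ 4)"
proof (rule monotone_onI)
  fix u v :: real assume "u \<in> {0<..1}" "v \<in> {0<..1}" "u \<le> v"
  have "r u \<le> r v" using mono_r \<open>u \<le> v\<close> by (rule monoD)
  moreover have "r u \<in> {0..1}" "r v \<in> {0..1}" using r_bounds by auto
  ultimately have "g (r u) \<le> g (r v)"
    by (cases "r v = 0") (auto intro: g_mono)
  then show "g (r u) ^ 4 \<le> g (r v) ^ 4"
    using g_nonneg[of "r u"] \<open>r u \<in> {0..1}\<close> by (intro power_mono) auto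
qed

lemma tau_moment_le_rho_moment: "ennreal 2 * tau_moment \<le> ennreal 3 * rho_moment"
proof -
  have "ennreal 2 * tau_moment = (\<integral>\<^sup>+u\<in>{0<..1}. ennreal (2 * u * g (r u) ^ 4) \<partial>lborel)"
    unfolding tau_moment_def by (subst nn_set_integral_ennreal_cmult[symmetric]) (auto simp: mult.assoc)
  also have "\<dots> \<le> (\<integral>\<^sup>+u\<in>{0<..1}. ennreal (3 * u\<^sup>2 * g (r u) ^ 4) \<partial>lborel)"
    by (rule nn_set_integral_chebyshev_weights[OF mono_on_g_r]) auto
  also have "\<dots> = ennreal 3 * rho_moment"
    unfolding rho_moment_def by (subst nn_set_integral_ennreal_cmult[symmetric]) (auto simp: mult.assoc)
  finally show ?thesis .
qed

lemma moments_finite: "rho_moment < \<infinity>" "tau_moment < \<infinity>"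
  using rho_moment_le_1 tau_moment_le_1 ennreal_one_less_top by (auto intro: le_less_trans)

lemma spearman_rho_eq_rho_moment: "spearman_rho (S_diag \<delta>) = 3 * enn2real rho_moment"
proof -
  have "enn2real integral_x_d = 1/4 + enn2real rho_moment / 4"
    unfolding integral_x_d_eq using moments_finite
    by (subst enn2real_plus) (auto simp: enn2real_mult ennreal_mult_less_top)
  then show ?thesis by (simp add: spearman_rho_eq_integral_x_d)
qed

lemma kendall_tau_eq_tau_moment:
  assumes "(\<lambda>p. S_diag \<delta> (fst p) (snd p)) \<in> borel_measurable borel"
  shows "kendall_tau (S_diag \<delta>) = 2 * enn2real tau_moment"
proof -
  have "enn2real integral_d2_div_x = 1/4 + enn2real tau_moment / 2"
    unfolding integral_d2_div_x_eq using moments_finite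
    by (subst enn2real_plus) (auto simp: enn2real_mult ennreal_mult_less_top simp del: ennreal_half)
  then show ?thesis using assms by (simp add: kendall_tau_eq_integral_d2_div_x)
qed

lemma kendall_tau_le_spearman_rho: "kendall_tau (S_diag \<delta>) \<le> spearman_rho (S_diag \<delta>)"
proof (cases "(\<lambda>p. S_diag \<delta> (fst p) (snd p)) \<in> borel_measurable borel")
  case True
  have "2 * enn2real tau_moment \<le> 3 * enn2real rho_moment"
    using enn2real_mono[OF tau_moment_le_rho_moment] moments_finite
    by (simp add: enn2real_mult ennreal_mult_less_top)
  with True show ?thesis
    by (simp add: kendall_tau_eq_tau_moment spearman_rho_eq_rho_moment)
next
  case False
  then show ?thesis
    unfolding kendall_tau_nonmeasurable[OF False] spearman_rho_eq_rho_moment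
    using enn2real_nonneg[of rho_moment] by linarith
qed

end

section \<open>Sharpness\<close>

definition sharp_diagonal :: "real \<Rightarrow> real \<Rightarrow> real" where
  "sharp_diagonal b x = (if x \<le> b then b * x else x\<^sup>2)"

lemma sharp_diagonal_lipschitz:
  assumes b: "b \<in> {0..1}"
  shows "2-lipschitz_on {0..1} (sharp_diagonal b)"
proof -
  have "2-lipschitz_on {0..b} (\<lambda>x. b * x)"
  proof (rule lipschitz_onI)
    fix x y :: real
    have "dist (b * x) (b * y) = b * dist x y"
      using b by (simp add: dist_real_def abs_mult right_diff_distrib[symmetric])
    also have "\<dots> \<le> 2 * dist x y" using b by (intro mult_right_mono) auto
    finally show "dist (b * x) (b * y) \<le> 2 * dist x y" .
  qed simp
  moreover have "2-lipschitz_on {b..1} (\<lambda>x. x\<^sup>2)"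
  proof (rule lipschitz_onI)
    fix x y :: real assume "x \<in> {b..1}" "y \<in> {b..1}"
    then have "\<bar>x + y\<bar> \<le> 2" using b by auto
    then have "\<bar>x + y\<bar> * \<bar>x - y\<bar> \<le> 2 * \<bar>x - y\<bar>" by (intro mult_right_mono) auto
    then show "dist (x\<^sup>2) (y\<^sup>2) \<le> 2 * dist x y"
      by (simp add: dist_real_def power2_eq_square abs_mult[symmetric] algebra_simps)
  qed simp
  ultimately show ?thesis
    unfolding sharp_diagonal_def[abs_def] by (rule lipschitz_on_concat) (simp add: power2_eq_square)
qed

lemma sharp_diagonal_in_LSL:
  assumes b: "b \<in> {0..1}"
  shows "sharp_diagonal b \<in> diagonals_LSL"
proof -
  have div: "sharp_diagonal b x / x = (if x \<le> b then b else x)"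
    and div_square: "sharp_diagonal b x / x\<^sup>2 = (if x \<le> b then b / x else 1)" if "x \<in> {0<..1}" for x
    using that by (auto simp: sharp_diagonal_def power2_eq_square)
  have mono_div: "mono_on {0<..1} (\<lambda>x. sharp_diagonal b x / x)"
    by (rule monotone_onI) (auto simp: div)
  have antimono_div_square: "antimono_on {0<..1} (\<lambda>x. sharp_diagonal b x / x\<^sup>2)"
  proof (rule monotone_onI)
    fix x y :: real assume x: "x \<in> {0<..1}" and y: "y \<in> {0<..1}" and "x \<le> y"
    have "b / y \<le> b / x" using x y b \<open>x \<le> y\<close> by (intro divide_left_mono) auto
    moreover have "1 \<le> b / x" if "x \<le> b" using that x by simp
    ultimately show "sharp_diagonal b y / y\<^sup>2 \<le> sharp_diagonal b x / x\<^sup>2"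
      using \<open>x \<le> y\<close> by (simp add: div_square[OF x] div_square[OF y])
  qed
  have mono: "mono_on {0..1} (sharp_diagonal b)"
  proof (rule monotone_onI)
    fix x y :: real assume x: "x \<in> {0..1}" and "x \<le> y"
    have "b * x \<le> b * y" using b \<open>x \<le> y\<close> by (intro mult_left_mono) auto
    moreover have "b * x \<le> y\<^sup>2" if "x \<le> b" "b < y"
      using that x mult_mono[of b y x y] by (simp add: power2_eq_square)
    moreover have "x\<^sup>2 \<le> y\<^sup>2" using x \<open>x \<le> y\<close> by (intro power_mono) auto
    ultimately show "sharp_diagonal b x \<le> sharp_diagonal b y"
      using \<open>x \<le> y\<close> by (auto simp: sharp_diagonal_def)
  qed
  have le: "sharp_diagonal b u \<le> u" and nonneg: "0 \<le> sharp_diagonal b u" if "u \<in> {0..1}" for u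
    using that b mult_right_mono[of b 1 u] mult_left_mono[of u 1 u]
    by (auto simp: sharp_diagonal_def power2_eq_square)
  have "sharp_diagonal b u \<in> {0..1}" if "u \<in> {0..1}" for u
    using le[OF that] nonneg[OF that] that by simp
  moreover have "sharp_diagonal b 1 = 1"
    using b by (simp add: sharp_diagonal_def)
  moreover have "\<bar>sharp_diagonal b u - sharp_diagonal b v\<bar> \<le> 2 * \<bar>u - v\<bar>" if "u \<in> {0..1}" "v \<in> {0..1}" for u v
    using sharp_diagonal_lipschitz[OF b] that by (simp add: lipschitz_on_def dist_real_def)
  ultimately show ?thesis
    unfolding diagonals_LSL_def diagonals_def using le mono mono_div antimono_div_square by blast
qed

lemma sharp_diagonal_tau_rho:
  assumes b: "b \<in> {0..1}"
  shows "kendall_tau (S_diag (sharp_diagonal b)) = b ^ 4"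
    and "spearman_rho (S_diag (sharp_diagonal b)) = b ^ 4"
proof -
  interpret LSL_diagonal "sharp_diagonal b"
    using sharp_diagonal_in_LSL[OF b] by unfold_locales
  have tail_nonneg: "0 \<le> (1 - b ^ 4) / 4" using b by (simp add: power_le_one)
  have tail: "((\<lambda>x. x ^ 3) has_integral (1 - b ^ 4) / 4) {b..1}"
    using has_integral_power_real[of b 1 3] b by (simp add: numeral_eq_Suc)
  have "integral_x_d = ennreal (b * (b ^ 3 / 3)) + ennreal ((1 - b ^ 4) / 4)"
    unfolding integral_x_d_def
  proof (rule nn_set_integral_unit_split[OF b _ _ _ tail])
    show "((\<lambda>x. b * x\<^sup>2) has_integral b * (b ^ 3 / 3)) {0..b}"
      using has_integral_mult_right[OF has_integral_power_real[of 0 b 2], of b] b by (simp add: numeral_eq_Suc)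
  qed (use b in \<open>auto simp: d_eq sharp_diagonal_def power2_eq_square power3_eq_cube\<close>)
  then have "enn2real integral_x_d = b * (b ^ 3 / 3) + (1 - b ^ 4) / 4"
    using b tail_nonneg by (simp add: enn2real_plus)
  then show "spearman_rho (S_diag (sharp_diagonal b)) = b ^ 4"
    by (simp add: spearman_rho_eq_integral_x_d field_simps power4_eq_xxxx power3_eq_cube)
  have "integral_d2_div_x = ennreal (b\<^sup>2 * (b\<^sup>2 / 2)) + ennreal ((1 - b ^ 4) / 4)"
    unfolding integral_d2_div_x_def
  proof (rule nn_set_integral_unit_split[OF b _ _ _ tail])
    show "((\<lambda>x. b\<^sup>2 * x) has_integral b\<^sup>2 * (b\<^sup>2 / 2)) {0..b}"
      using has_integral_mult_right[OF has_integral_power_real[of 0 b 1], of "b\<^sup>2"] b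
      by (simp add: algebra_simps power2_eq_square power4_eq_xxxx)
  qed (use b in \<open>auto simp: d_eq sharp_diagonal_def power2_eq_square power3_eq_cube\<close>)
  then have "enn2real integral_d2_div_x = b\<^sup>2 * (b\<^sup>2 / 2) + (1 - b ^ 4) / 4"
    using b tail_nonneg by (simp add: enn2real_plus)
  moreover have "(\<lambda>p. S_diag (sharp_diagonal b) (fst p) (snd p)) \<in> borel_measurable borel"
    unfolding S_diag_def sharp_diagonal_def by (rule measurable_pair_borel_real) measurable
  ultimately show "kendall_tau (S_diag (sharp_diagonal b)) = b ^ 4"
    by (simp add: kendall_tau_eq_integral_d2_div_x field_simps power4_eq_xxxx power2_eq_square)
qed

theorem mainTheorem9:
  shows "(\<forall>\<delta>\<in>diagonals_LSL. kendall_tau (S_diag \<delta>) \<le> spearman_rho (S_diag \<delta>)) \<and>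
         (\<forall>x\<in>{0..1::real}. \<exists>\<delta>\<in>diagonals_LSL.
             kendall_tau (S_diag \<delta>) = x \<and> spearman_rho (S_diag \<delta>) = x)"
proof (intro conjI ballI)
  fix \<delta> assume "\<delta> \<in> diagonals_LSL"
  then interpret LSL_diagonal \<delta> by unfold_locales
  show "kendall_tau (S_diag \<delta>) \<le> spearman_rho (S_diag \<delta>)"
    by (rule kendall_tau_le_spearman_rho)
next
  fix x :: real assume "x \<in> {0..1}"
  then have b: "root 4 x \<in> {0..1}" and "root 4 x ^ 4 = x"
    by (auto intro: real_root_ge_zero)
  with sharp_diagonal_in_LSL[OF b] sharp_diagonal_tau_rho[OF b]
  show "\<exists>\<delta>\<in>diagonals_LSL. kendall_tau (S_diag \<delta>) = x \<and> spearman_rho (S_diag \<delta>) = x"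
    by metis
qed

end
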